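(* Let $E_0,E,X,U$ be Banach spaces, $Z=X\times U$, $Q\subset E$ nonempty closed convex, and let $I\colon Z\to\mathbb{R}^m$, $F\colon Z\to E_0$, $G\colon Z\to E$. Consider (MP2): minimize $I(x,u)$ with respect to $\mathbb{R}^m_+$ subject to $F(x,u)=0$ and $G(x,u)\in Q$; let $D=\{z\in Z:F(z)=0\}$. Let $z_0=(x_0,u_0)$ be feasible for (MP2) and assume: (A1) there are $r_1,r_1'>0$ such that $I,F,G$ are twice continuously Fréchet differentiable on $B_X(x_0,r_1)\times B_U(u_0,r_1')$; (A2) $F_x(z_0)\colon X\to E_0$ is bijective; (A3) $\nabla G(z_0)(T(D;z_0))=E$. If $z_0$ is a locally weak Pareto solution of (MP2), then for each $d\in\mathcal{C}_2(z_0)$ there exists a triple $(\lambda,v^*,e^* )\in\Lambda_2(z_0)$ such that $\langle\lambda,\nabla^2 I(z_0)(d,d)\rangle+\langle v^*,\nabla^2F(z_0)(d,d)\rangle+\langle e^*,\nabla^2G(z_0)(d,d)\rangle\ge0$.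
   Context: $z_0$ is a locally weak Pareto solution of (MP2) if there is $\epsilon>0$ such that $I(z)-I(z_0)\notin-\mathrm{int}\,\mathbb{R}^m_+$ for every feasible $z=(x,u)$ with $\|x-x_0\|\le\epsilon$, $\|u-u_0\|\le\epsilon$. $T(D;z_0)$ is the contingent cone $\{h:\exists t_k\to0^+,\exists h_k\to h,\ z_0+t_kh_k\in D\}$. $\Lambda_2(z_0)$ is the set of $(\lambda,v^*,e^* )\in\mathbb{R}^m_+\times E_0^*\times E^*$ with $|\lambda|=1$, $\nabla_z\mathcal{L}_2(z_0,\lambda,v^*,e^* )=0$ and $e^*\in N(Q;G(z_0))=\{e^*:\langle e^*,e-G(z_0)\rangle\le0\ \forall e\in Q\}$, where $\mathcal{L}_2(z,\lambda,v^*,e^* )=\langle\lambda,I(z)\rangle+\langle v^*,F(z)\rangle+\langle e^*,G(z)\rangle$. $\mathcal{C}_2(z_0)$ is the closure in $Z$ of $\mathcal{C}_{02}(z_0)=\{d\in Z:\nabla I(z_0)d\in-\mathbb{R}^m_+,\ \nabla F(z_0)d=0,\ \nabla G(z_0)d\in\mathrm{cone}(Q-G(z_0))\}$, with $\mathrm{cone}(Q-G(z_0))=\{\mu(q-G(z_0)):q\in Q,\mu>0\}$. *)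

theory Defs
  imports "HOL-Analysis.Analysis"
begin

definition contingent_cone :: "'a::real_normed_vector set \<Rightarrow> 'a \<Rightarrow> 'a set" where
  "contingent_cone D z0 = {h. \<exists>t hs. (\<forall>k. t k > 0) \<and> t \<longlonglongrightarrow> 0 \<and> hs \<longlonglongrightarrow> h
       \<and> (\<forall>k. z0 + t k *\<^sub>R hs k \<in> D)}"

definition cone_of_diff :: "'a::real_vector set \<Rightarrow> 'a \<Rightarrow> 'a set" where
  "cone_of_diff Q g = {\<mu> *\<^sub>R (q - g) | q \<mu>. q \<in> Q \<and> \<mu> > 0}"

definition normal_cone_cvx :: "'a::real_normed_vector set \<Rightarrow> 'a \<Rightarrow> ('a \<Rightarrow>\<^sub>L real) set" where
  "normal_cone_cvx Q g = {e. \<forall>q\<in>Q. blinfun_apply e (q - g) \<le> 0}"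

definition loc_weak_pareto ::
  "('x::real_normed_vector \<times> 'u::real_normed_vector \<Rightarrow> real^'m::finite) \<Rightarrow>
   ('x \<times> 'u \<Rightarrow> 'e0::real_normed_vector) \<Rightarrow> ('x \<times> 'u \<Rightarrow> 'e::real_normed_vector) \<Rightarrow>
   'e set \<Rightarrow> 'x \<times> 'u \<Rightarrow> bool" where
  "loc_weak_pareto I F G Q z0 \<longleftrightarrow>
     (\<exists>\<epsilon>>0. \<forall>x u. F (x,u) = 0 \<and> G (x,u) \<in> Q \<and> norm (x - fst z0) \<le> \<epsilon> \<and> norm (u - snd z0) \<le> \<epsilon>
        \<longrightarrow> \<not> (\<forall>i. (I (x,u) - I z0) $ i < 0))"

text \<open>Critical cone C_2(z0) (closure of C_02(z0)); I', F', G' are the first derivatives at z0.\<close>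
definition crit_cone ::
  "('z::real_normed_vector \<Rightarrow>\<^sub>L (real^'m::finite)) \<Rightarrow> ('z \<Rightarrow>\<^sub>L 'e0::real_normed_vector) \<Rightarrow>
   ('z \<Rightarrow>\<^sub>L 'e::real_normed_vector) \<Rightarrow> 'e set \<Rightarrow> 'e \<Rightarrow> 'z set" where
  "crit_cone dI dF dG Q g = closure {d. (\<forall>i. (blinfun_apply dI d) $ i \<le> 0) \<and> blinfun_apply dF d = 0 \<and> blinfun_apply dG d \<in> cone_of_diff Q g}"

definition Lambda2 ::
  "('z::real_normed_vector \<Rightarrow>\<^sub>L (real^'m::finite)) \<Rightarrow> ('z \<Rightarrow>\<^sub>L 'e0::real_normed_vector) \<Rightarrow>
   ('z \<Rightarrow>\<^sub>L 'e::real_normed_vector) \<Rightarrow> 'e set \<Rightarrow> 'e \<Rightarrow>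
   ((real^'m) \<times> ('e0 \<Rightarrow>\<^sub>L real) \<times> ('e \<Rightarrow>\<^sub>L real)) set" where
  "Lambda2 dI dF dG Q g = {(lam, v, e). (\<forall>i. lam $ i \<ge> 0) \<and> norm lam = 1
      \<and> (\<forall>h. lam \<bullet> blinfun_apply dI h + blinfun_apply v (blinfun_apply dF h) + blinfun_apply e (blinfun_apply dG h) = 0) \<and> e \<in> normal_cone_cvx Q g}"

definition C2_on ::
  "'z::real_normed_vector set \<Rightarrow> ('z \<Rightarrow> 'b::real_normed_vector) \<Rightarrow> ('z \<Rightarrow> 'z \<Rightarrow>\<^sub>L 'b)
   \<Rightarrow> ('z \<Rightarrow> 'z \<Rightarrow>\<^sub>L 'z \<Rightarrow>\<^sub>L 'b) \<Rightarrow> bool" where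
  "C2_on S f f1 f2 \<longleftrightarrow> (\<forall>z\<in>S. (f has_derivative blinfun_apply (f1 z)) (at z)
      \<and> (f1 has_derivative blinfun_apply (f2 z)) (at z)) \<and> continuous_on S f2"

end

theory Submission
  imports Defs
begin

text \<open>
  Fix a critical direction d. Suppose w solves the linearised second-order system
  \<open>F'(z0) w + F''(z0)(d,d) = 0\<close>, \<open>G'(z0) w + G''(z0)(d,d) \<in> cone(Q - G(z0))\<close> with
  \<open>I'(z0) w + I''(z0)(d,d)\<close> in the open negative orthant. By (A2) and (A3) the map
  \<open>h \<mapsto> (F'(z0) h, G'(z0) h)\<close> is onto, hence open by Banach's open mapping theorem, and
  the Lyusternik-Graves theorem moves the points of the parabola \<open>z0 + t d + t\<^sup>2/2 w\<close> onto the
  feasible set at cost \<open>o(t\<^sup>2)\<close>. There every component of I drops below its value at z0,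
  contradicting local weak Pareto optimality. So the system is infeasible, and separating its
  image from the negative orthant yields a multiplier in \<open>\<Lambda>\<^sub>2(z0)\<close> satisfying the
  second-order inequality for d in \<open>C\<^sub>0\<^sub>2(z0)\<close>. Since openness makes \<open>v\<^sup>*, e\<^sup>*\<close>
  depend Lipschitz-continuously on \<open>\<lambda>\<close>, the multiplier set is compact and the inequality
  passes to the closure \<open>C\<^sub>2(z0)\<close>.
\<close>

section \<open>Open mapping and metric regularity\<close>

definition open_with_constant :: "real \<Rightarrow> ('a::real_normed_vector \<Rightarrow> 'b::real_normed_vector) \<Rightarrow> bool" where
  "open_with_constant C A \<longleftrightarrow> (\<forall>y. \<exists>x. A x = y \<and> norm x \<le> C * norm y)"

lemma convergent_geometric_steps:
  fixes s :: "nat \<Rightarrow> 'a::banach"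
  assumes step: "\<And>k. norm (s (Suc k) - s k) \<le> a * (1/2)^k"
  shows "\<exists>l. s \<longlonglongrightarrow> l \<and> norm (l - s 0) \<le> 2 * a"
proof -
  define x where "x k = s (Suc k) - s k" for k
  have geom: "(\<lambda>k. a * (1/2::real)^k) sums (a * 2)"
    using sums_mult[OF geometric_sums[of "1/2::real"], of a] by simp
  have sumg: "summable (\<lambda>k. a * (1/2::real)^k)"
    using geom by (rule sums_summable)
  have sumn: "summable (\<lambda>k. norm (x k))"
    by (rule summable_comparison_test'[OF sumg]) (simp add: x_def step)
  have tele: "s 0 + (\<Sum>j<k. x j) = s k" for k
    by (induction k) (simp_all add: x_def add.assoc[symmetric])
  have "(\<lambda>k. s 0 + (\<Sum>j<k. x j)) \<longlonglongrightarrow> s 0 + suminf x"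
    by (intro tendsto_add tendsto_const summable_LIMSEQ summable_norm_cancel[OF sumn])
  then have "s \<longlonglongrightarrow> s 0 + suminf x"
    unfolding tele .
  moreover have "norm (suminf x) \<le> 2 * a"
  proof -
    have "norm (suminf x) \<le> (\<Sum>k. norm (x k))" by (rule summable_norm[OF sumn])
    also have "\<dots> \<le> (\<Sum>k. a * (1/2)^k)"
      by (rule suminf_le) (use step sumn sumg in \<open>simp_all add: x_def\<close>)
    finally show ?thesis using geom by (simp add: sums_iff)
  qed
  ultimately show ?thesis by (intro exI[of _ "s 0 + suminf x"]) simp
qed

lemma successive_approximation:
  fixes \<Phi> :: "'a::banach \<Rightarrow> 'b::real_normed_vector"
  assumes cont: "continuous_on (cball zc R) \<Phi>" and M: "M \<ge> 0"
    and step: "\<And>z. z \<in> cball zc R \<Longrightarrow> \<exists>x. norm x \<le> M * norm (y - \<Phi> z) \<and>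
                 (z + x \<in> cball zc R \<longrightarrow> norm (y - \<Phi> (z + x)) \<le> norm (y - \<Phi> z) / 2)"
    and start: "dist zc zp + 2 * M * norm (y - \<Phi> zp) \<le> R"
  shows "\<exists>z. \<Phi> z = y \<and> norm (z - zp) \<le> 2 * M * norm (y - \<Phi> zp)"
proof -
  obtain st where st: "\<And>z. z \<in> cball zc R \<Longrightarrow> norm (st z) \<le> M * norm (y - \<Phi> z) \<and>
                 (z + st z \<in> cball zc R \<longrightarrow> norm (y - \<Phi> (z + st z)) \<le> norm (y - \<Phi> z) / 2)"
    using step by metis
  define s where "s = rec_nat zp (\<lambda>_ z. z + st z)"
  have s0: "s 0 = zp" and sS: "\<And>k. s (Suc k) = s k + st (s k)" by (simp_all add: s_def)
  define \<rho> where "\<rho> = norm (y - \<Phi> zp)"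
  have M\<rho>: "M * \<rho> \<ge> 0" using M by (simp add: \<rho>_def)
  have inv: "s k \<in> cball zc R \<and> norm (y - \<Phi> (s k)) \<le> \<rho> / 2^k
      \<and> norm (s k - zp) \<le> 2*M*\<rho>*(1 - 1/2^k)" for k
  proof (induction k)
    case 0
    then show ?case using start M\<rho> by (simp add: s0 \<rho>_def)
  next
    case (Suc k)
    then have sk: "s k \<in> cball zc R" and r: "norm (y - \<Phi> (s k)) \<le> \<rho> / 2^k"
      and d: "norm (s k - zp) \<le> 2*M*\<rho>*(1 - 1/2^k)" by auto
    have nx: "norm (st (s k)) \<le> M * (\<rho> / 2^k)"
      using st[OF sk] r M by (meson mult_left_mono order_trans)
    have "norm (s (Suc k) - zp) \<le> norm (s k - zp) + norm (st (s k))"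
      by (simp add: sS) (metis add_diff_eq diff_add_eq norm_triangle_ineq add.commute)
    also have "\<dots> \<le> 2*M*\<rho>*(1 - 1/2^Suc k)" using d nx by (simp add: field_simps)
    finally have d': "norm (s (Suc k) - zp) \<le> 2*M*\<rho>*(1 - 1/2^Suc k)" .
    also have "\<dots> \<le> 2*M*\<rho>" using M\<rho> by (simp add: mult_left_le)
    finally have "norm (s (Suc k) - zp) \<le> 2*M*\<rho>" .
    moreover have "dist zc (s (Suc k)) \<le> dist zc zp + norm (s (Suc k) - zp)"
      using dist_triangle[of zc "s (Suc k)" zp] by (simp add: dist_norm norm_minus_commute)
    ultimately have "s (Suc k) \<in> cball zc R"
      using start unfolding \<rho>_def by simp
    moreover have "norm (y - \<Phi> (s (Suc k))) \<le> \<rho> / 2 ^ Suc k"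
      using st[OF sk] r calculation by (simp add: sS)
    ultimately show ?case using d' by simp
  qed
  have steps: "norm (s (Suc k) - s k) \<le> M * \<rho> * (1/2)^k" for k
  proof -
    have "norm (st (s k)) \<le> M * norm (y - \<Phi> (s k))" using st inv by blast
    also have "\<dots> \<le> M * (\<rho> / 2^k)" using inv M by (intro mult_left_mono) auto
    finally show ?thesis by (simp add: sS power_divide)
  qed
  obtain l where l: "s \<longlonglongrightarrow> l" "norm (l - zp) \<le> 2 * M * \<rho>"
    using convergent_geometric_steps[OF steps] unfolding s0 mult.assoc by blast
  have "l \<in> cball zc R"
    using closed_sequentially[OF closed_cball] l(1) inv by blast
  then have "(\<lambda>k. \<Phi> (s k)) \<longlonglongrightarrow> \<Phi> l"
    using cont l(1) inv unfolding continuous_on_sequentially comp_def by blast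
  moreover have "(\<lambda>k. \<Phi> (s k)) \<longlonglongrightarrow> y"
  proof -
    have "\<forall>k. norm (\<Phi> (s k) - y) \<le> \<rho> / 2^k"
      using inv by (simp add: norm_minus_commute)
    moreover have "(\<lambda>k. \<rho> / 2^k) \<longlonglongrightarrow> 0"
      by (intro LIMSEQ_divide_realpow_zero) auto
    ultimately have "(\<lambda>k. \<Phi> (s k) - y) \<longlonglongrightarrow> 0"
      by (rule Lim_null_comparison[OF always_eventually])
    then show ?thesis by (rule LIM_zero_cancel)
  qed
  ultimately have "\<Phi> l = y" using LIMSEQ_unique by blast
  with l(2) show ?thesis unfolding \<rho>_def by blast
qed

lemma surj_closure_image_ball_interior:
  fixes f :: "'a::real_normed_vector \<Rightarrow> 'b::banach"
  assumes su: "surj f"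
  shows "\<exists>n::nat. \<exists>y0. \<exists>\<epsilon>>0. ball y0 \<epsilon> \<subseteq> closure (f ` ball 0 (real n))"
proof -
  define T where "T n = closure (f ` ball 0 (real n))" for n :: nat
  have cover: "\<Union>(range T) = UNIV"
  proof -
    have "y \<in> \<Union>(range T)" for y
    proof -
      obtain x where "y = f x" using su by (metis surjD)
      moreover obtain n :: nat where "norm x < real n" using reals_Archimedean2 by blast
      ultimately have "y \<in> T n" unfolding T_def using closure_subset by fastforce
      then show ?thesis by blast
    qed
    then show ?thesis by blast
  qed
  moreover have "\<exists>n. interior (T n) \<noteq> {}"
  proof (rule ccontr)
    assume "\<not> ?thesis"
    moreover have "closed (T n)" for n unfolding T_def by simp
    ultimately have "euclidean interior_of \<Union>(range T) = {}"
      by (intro Baire_category_alt)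
        (auto simp: completely_metrizable_space_euclidean closed_closedin[symmetric])
    then show False using cover by simp
  qed
  then obtain n where "interior (T n) \<noteq> {}" by blast
  then obtain y0 \<epsilon> where "\<epsilon> > 0" "ball y0 \<epsilon> \<subseteq> T n"
    by (metis all_not_in_conv open_contains_ball open_interior interior_subset subset_trans)
  then show ?thesis unfolding T_def by blast
qed

lemma open_mapping_approximate:
  fixes f :: "'a::real_normed_vector \<Rightarrow> 'b::banach"
  assumes lin: "bounded_linear f" and su: "surj f"
  shows "\<exists>M\<ge>0. \<forall>y. \<forall>\<eta>>0. \<exists>x. norm x \<le> M * norm y \<and> norm (f x - y) \<le> \<eta>"
proof -
  interpret f: bounded_linear f by (rule lin)
  obtain n :: nat and y0 \<epsilon> where \<epsilon>: "\<epsilon> > 0" "ball y0 \<epsilon> \<subseteq> closure (f ` ball 0 (real n))"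
    using surj_closure_image_ball_interior[OF su] by blast
  have small: "\<exists>x. norm x < 2 * real n \<and> norm (f x - y) < \<eta>" if "norm y < \<epsilon>" "\<eta> > 0" for y \<eta>
  proof -
    have "y0 + y \<in> closure (f ` ball 0 (real n))" "y0 \<in> closure (f ` ball 0 (real n))"
      using \<epsilon> that by (auto simp: dist_norm)
    then obtain a1 a2 where "a1 \<in> f ` ball 0 (real n)" "dist a1 (y0 + y) < \<eta>/2"
      "a2 \<in> f ` ball 0 (real n)" "dist a2 y0 < \<eta>/2"
      using \<open>\<eta> > 0\<close> unfolding closure_approachable by (meson half_gt_zero)
    then obtain x1 x2 where x: "norm x1 < real n" "norm x2 < real n"
      "dist (f x1) (y0 + y) < \<eta>/2" "dist (f x2) y0 < \<eta>/2"
      by auto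
    have "f (x1 - x2) - y = (f x1 - (y0 + y)) - (f x2 - y0)" by (simp add: f.diff algebra_simps)
    then have "norm (f (x1 - x2) - y) \<le> norm (f x1 - (y0 + y)) + norm (f x2 - y0)"
      by (metis norm_triangle_ineq4)
    then have "norm (f (x1 - x2) - y) < \<eta>"
      using x by (simp add: dist_norm)
    moreover have "norm (x1 - x2) < 2 * real n"
      using x norm_triangle_ineq4[of x1 x2] by linarith
    ultimately show ?thesis by blast
  qed
  define M where "M = 4 * real n / \<epsilon>"
  have "\<exists>x. norm x \<le> M * norm y \<and> norm (f x - y) \<le> \<eta>" if \<eta>: "\<eta> > 0" for y \<eta>
  proof (cases "y = 0")
    case True then show ?thesis using \<eta> by (intro exI[of _ 0]) simp
  next
    case False
    \<comment> \<open>rescale y into the ball of radius \<open>\<epsilon>\<close>, approximate there, and scale back\<close>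
    define c where "c = (\<epsilon>/2) / norm y"
    have c: "c > 0" using False \<epsilon> by (simp add: c_def)
    have "norm (c *\<^sub>R y) < \<epsilon>" using False \<epsilon> by (simp add: c_def)
    then obtain x' where x': "norm x' < 2 * real n" "norm (f x' - c *\<^sub>R y) < c * \<eta>"
      using small[of "c *\<^sub>R y" "c * \<eta>"] mult_pos_pos[OF c \<eta>] by blast
    have "f ((1/c) *\<^sub>R x') - y = (1/c) *\<^sub>R (f x' - c *\<^sub>R y)"
      using c by (simp add: f.scaleR algebra_simps)
    then have "norm (f ((1/c) *\<^sub>R x') - y) = norm (f x' - c *\<^sub>R y) / c"
      using c by simp
    also have "\<dots> \<le> \<eta>"
      using x' c by (simp add: divide_le_eq mult.commute)
    finally have "norm (f ((1/c) *\<^sub>R x') - y) \<le> \<eta>" .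
    moreover have "norm ((1/c) *\<^sub>R x') \<le> M * norm y"
      using x' c False \<epsilon> by (simp add: c_def M_def field_simps)
    ultimately show ?thesis by blast
  qed
  moreover have "M \<ge> 0" using \<epsilon> by (simp add: M_def)
  ultimately show ?thesis by blast
qed

theorem open_mapping_with_constant:
  fixes f :: "'a::banach \<Rightarrow> 'b::banach"
  assumes lin: "bounded_linear f" and su: "surj f"
  shows "\<exists>C>0. open_with_constant C f"
proof -
  interpret f: bounded_linear f by (rule lin)
  obtain M where M: "M \<ge> 0" "\<And>y \<eta>. \<eta> > 0 \<Longrightarrow> \<exists>x. norm x \<le> M * norm y \<and> norm (f x - y) \<le> \<eta>"
    using open_mapping_approximate[OF lin su] by blast
  have "\<exists>x. f x = y \<and> norm x \<le> (2*M+1) * norm y" for y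
  proof -
    have "\<exists>x. f x = y \<and> norm (x - 0) \<le> 2 * M * norm (y - f 0)"
    proof (rule successive_approximation[where zc=0 and R="2*M*norm y"])
      show "continuous_on (cball 0 (2 * M * norm y)) f"
        using linear_continuous_on[OF lin] by blast
      show "dist 0 0 + 2 * M * norm (y - f 0) \<le> 2 * M * norm y" by (simp add: f.zero)
      fix z
      show "\<exists>x. norm x \<le> M * norm (y - f z) \<and>
             (z + x \<in> cball 0 (2 * M * norm y) \<longrightarrow> norm (y - f (z + x)) \<le> norm (y - f z) / 2)"
      proof (cases "y - f z = 0")
        case True then show ?thesis by (intro exI[of _ 0]) simp
      next
        case False
        then obtain x where x: "norm x \<le> M * norm (y - f z)" "norm (f x - (y - f z)) \<le> norm (y - f z)/2"
          using M(2)[of "norm (y - f z)/2" "y - f z"] by auto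
        have "norm (y - f (z + x)) = norm (f x - (y - f z))"
          by (metis f.add minus_diff_eq norm_minus_cancel diff_diff_eq)
        then show ?thesis using x by auto
      qed
    qed (use M in simp)
    then obtain x where "f x = y" "norm x \<le> 2 * M * norm y" by (auto simp: f.zero)
    moreover have "2 * M * norm y \<le> (2*M+1) * norm y" by (simp add: mult_right_mono)
    ultimately show ?thesis by (blast intro: order_trans)
  qed
  moreover have "2*M+1 > 0" using M by simp
  ultimately show ?thesis unfolding open_with_constant_def by blast
qed

lemma graves_local_solution:
  fixes \<Phi> :: "'a::banach \<Rightarrow> 'b::banach" and A :: "'a \<Rightarrow> 'b"
  assumes lin: "bounded_linear A" and C: "C > 0" and openA: "open_with_constant C A"
    and strict: "\<And>z z'. z \<in> cball zc r \<Longrightarrow> z' \<in> cball zc r \<Longrightarrow>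
                   norm (\<Phi> z - \<Phi> z' - A (z - z')) \<le> (1/(2*C)) * norm (z - z')"
    and z: "dist zc z \<le> r/2" and y: "2*C*norm (y - \<Phi> z) \<le> r/2"
  shows "\<exists>z'. \<Phi> z' = y \<and> norm (z' - z) \<le> 2*C*norm (y - \<Phi> z)"
proof (rule successive_approximation[where zc=zc and R=r and M=C])
  interpret A: bounded_linear A by (rule lin)
  obtain K where K: "K > 0" "\<And>x. norm (A x) \<le> norm x * K" using A.pos_bounded by blast
  have "lipschitz_on (K + 1/(2*C)) (cball zc r) \<Phi>"
  proof (rule lipschitz_onI)
    fix a b assume ab: "a \<in> cball zc r" "b \<in> cball zc r"
    have "norm (\<Phi> a - \<Phi> b) \<le> norm (\<Phi> a - \<Phi> b - A (a - b)) + norm (A (a - b))"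
      by (metis norm_triangle_ineq diff_add_cancel)
    also have "\<dots> \<le> (1/(2*C)) * norm (a - b) + norm (a - b) * K"
      using strict[OF ab] K(2)[of "a - b"] by linarith
    finally show "dist (\<Phi> a) (\<Phi> b) \<le> (K + 1/(2*C)) * dist a b"
      by (simp add: dist_norm algebra_simps)
  qed (use K C in simp)
  then show "continuous_on (cball zc r) \<Phi>" by (rule lipschitz_on_continuous_on)
  show "0 \<le> C" using C by simp
  show "dist zc z + 2 * C * norm (y - \<Phi> z) \<le> r" using z y by simp
  fix w assume w: "w \<in> cball zc r"
  \<comment> \<open>one Newton step with the linearization A\<close>
  obtain x where x: "A x = y - \<Phi> w" "norm x \<le> C * norm (y - \<Phi> w)"
    using openA unfolding open_with_constant_def by blast
  have "norm (y - \<Phi> (w + x)) \<le> norm (y - \<Phi> w) / 2" if wx: "w + x \<in> cball zc r"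
  proof -
    have "norm (y - \<Phi> (w + x)) = norm (\<Phi> (w + x) - \<Phi> w - A ((w + x) - w))"
      using x(1) by (metis add_diff_cancel_left' diff_diff_eq2 norm_minus_commute)
    also have "\<dots> \<le> (1/(2*C)) * norm x" using strict[OF wx w] by simp
    also have "\<dots> \<le> (1/(2*C)) * (C * norm (y - \<Phi> w))" using x(2) C by (intro mult_left_mono) auto
    also have "\<dots> = norm (y - \<Phi> w) / 2" using C by simp
    finally show ?thesis .
  qed
  with x(2) show "\<exists>x. norm x \<le> C * norm (y - \<Phi> w) \<and>
           (w + x \<in> cball zc r \<longrightarrow> norm (y - \<Phi> (w + x)) \<le> norm (y - \<Phi> w) / 2)" by blast
qed

lemma continuous_derivative_imp_strict:
  fixes f :: "'a::real_normed_vector \<Rightarrow> 'b::real_normed_vector" and f1 :: "'a \<Rightarrow> 'a \<Rightarrow>\<^sub>L 'b"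
  assumes S: "open S" "z0 \<in> S" and der: "\<And>z. z \<in> S \<Longrightarrow> (f has_derivative f1 z) (at z)"
    and cont: "isCont f1 z0" and \<epsilon>: "\<epsilon> > 0"
  shows "\<exists>\<rho>>0. cball z0 \<rho> \<subseteq> S \<and> (\<forall>z\<in>cball z0 \<rho>. \<forall>z'\<in>cball z0 \<rho>.
            norm (f z - f z' - f1 z0 (z - z')) \<le> \<epsilon> * norm (z - z'))"
proof -
  obtain \<delta> where \<delta>: "\<delta> > 0" "\<And>z. dist z z0 < \<delta> \<Longrightarrow> dist (f1 z) (f1 z0) < \<epsilon>"
    using cont \<epsilon> unfolding continuous_at_eps_delta by blast
  obtain \<rho>0 where \<rho>0: "\<rho>0 > 0" "cball z0 \<rho>0 \<subseteq> S" using S open_contains_cball by blast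
  define \<rho> where "\<rho> = min \<rho>0 (\<delta>/2)"
  have \<rho>: "\<rho> > 0" "cball z0 \<rho> \<subseteq> S" using \<rho>0 \<delta> by (auto simp: \<rho>_def)
  have "norm (f z - f z' - f1 z0 (z - z')) \<le> norm (z - z') * \<epsilon>"
    if z: "z \<in> cball z0 \<rho>" "z' \<in> cball z0 \<rho>" for z z'
  proof (rule differentiable_bound_linearization[where S="cball z0 \<rho>"])
    show "z' + t *\<^sub>R (z - z') \<in> cball z0 \<rho>" if "t \<in> {0..1}" for t
    proof -
      have "(1 - t) *\<^sub>R z' + t *\<^sub>R z \<in> cball z0 \<rho>"
        using convex_cball[of z0 \<rho>] z that unfolding convex_def by auto
      then show ?thesis by (simp add: algebra_simps)
    qed
    fix x assume x: "x \<in> cball z0 \<rho>"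
    show "(f has_derivative f1 x) (at x within cball z0 \<rho>)"
      using der x \<rho>(2) by (blast intro: has_derivative_at_withinI)
    have "dist x z0 < \<delta>" using x \<delta> by (simp add: \<rho>_def dist_commute)
    then show "onorm (blinfun_apply (f1 x) - blinfun_apply (f1 z0)) \<le> \<epsilon>"
      using \<delta>(2) by (simp add: dist_norm norm_blinfun.rep_eq fun_diff_def blinfun.diff_left[symmetric] less_imp_le)
  qed (use \<rho> in simp)
  with \<rho> show ?thesis by (auto simp: mult.commute)
qed

lemma continuous_derivative_imp_local_lipschitz:
  fixes f :: "'a::real_normed_vector \<Rightarrow> 'b::real_normed_vector" and f1 :: "'a \<Rightarrow> 'a \<Rightarrow>\<^sub>L 'b"
  assumes S: "open S" "z0 \<in> S" and der: "\<And>z. z \<in> S \<Longrightarrow> (f has_derivative f1 z) (at z)"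
    and cont: "isCont f1 z0"
  shows "\<exists>\<rho>>0. \<exists>L>0. \<forall>z\<in>cball z0 \<rho>. \<forall>z'\<in>cball z0 \<rho>. norm (f z - f z') \<le> L * norm (z - z')"
proof -
  obtain \<rho> where \<rho>: "\<rho> > 0" "\<And>z z'. z \<in> cball z0 \<rho> \<Longrightarrow> z' \<in> cball z0 \<rho> \<Longrightarrow>
      norm (f z - f z' - f1 z0 (z - z')) \<le> 1 * norm (z - z')"
    using continuous_derivative_imp_strict[OF S der cont, of 1] by auto
  have "norm (f z - f z') \<le> (norm (f1 z0) + 1) * norm (z - z')"
    if "z \<in> cball z0 \<rho>" "z' \<in> cball z0 \<rho>" for z z'
  proof -
    have "norm (f z - f z') \<le> norm (f z - f z' - f1 z0 (z - z')) + norm (f1 z0 (z - z'))"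
      by (metis norm_triangle_ineq diff_add_cancel)
    also have "\<dots> \<le> 1 * norm (z - z') + norm (f1 z0) * norm (z - z')"
      using \<rho>(2)[OF that] norm_blinfun[of "f1 z0" "z - z'"] by linarith
    finally show ?thesis by (simp add: algebra_simps)
  qed
  moreover have "norm (f1 z0) + 1 > 0" by (simp add: add_nonneg_pos)
  ultimately show ?thesis using \<rho>(1) by blast
qed

lemma metric_regularity_of_pair:
  fixes F :: "'a::banach \<Rightarrow> 'b::banach" and G :: "'a \<Rightarrow> 'c::banach"
    and F1 :: "'a \<Rightarrow> 'a \<Rightarrow>\<^sub>L 'b" and G1 :: "'a \<Rightarrow> 'a \<Rightarrow>\<^sub>L 'c"
  assumes S: "open S" "z0 \<in> S"
    and dF: "\<And>z. z \<in> S \<Longrightarrow> (F has_derivative F1 z) (at z)" and cF: "isCont F1 z0"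
    and dG: "\<And>z. z \<in> S \<Longrightarrow> (G has_derivative G1 z) (at z)" and cG: "isCont G1 z0"
    and C: "C > 0" and op: "open_with_constant C (\<lambda>h. (F1 z0 h, G1 z0 h))"
  shows "\<exists>r>0. \<forall>c a y. dist z0 c \<le> r/2 \<longrightarrow> 2 * C * norm ((a, y) - (F c, G c)) \<le> r/2 \<longrightarrow>
           (\<exists>z. F z = a \<and> G z = y \<and> norm (z - c) \<le> 2 * C * norm ((a, y) - (F c, G c)))"
proof -
  obtain \<rho>F where \<rho>F: "\<rho>F > 0" "\<And>z z'. z \<in> cball z0 \<rho>F \<Longrightarrow> z' \<in> cball z0 \<rho>F \<Longrightarrow>
      norm (F z - F z' - F1 z0 (z - z')) \<le> (1/(4*C)) * norm (z - z')"
    using continuous_derivative_imp_strict[OF S dF cF, of "1/(4*C)"] C by auto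
  obtain \<rho>G where \<rho>G: "\<rho>G > 0" "\<And>z z'. z \<in> cball z0 \<rho>G \<Longrightarrow> z' \<in> cball z0 \<rho>G \<Longrightarrow>
      norm (G z - G z' - G1 z0 (z - z')) \<le> (1/(4*C)) * norm (z - z')"
    using continuous_derivative_imp_strict[OF S dG cG, of "1/(4*C)"] C by auto
  define r where "r = min \<rho>F \<rho>G"
  have strict: "norm ((F z, G z) - (F z', G z') - (F1 z0 (z - z'), G1 z0 (z - z')))
      \<le> (1/(2*C)) * norm (z - z')"
    if "z \<in> cball z0 r" "z' \<in> cball z0 r" for z z'
  proof -
    have "norm ((F z, G z) - (F z', G z') - (F1 z0 (z - z'), G1 z0 (z - z')))
        \<le> norm (F z - F z' - F1 z0 (z - z')) + norm (G z - G z' - G1 z0 (z - z'))"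
      using norm_Pair_le by simp
    also have "\<dots> \<le> (1/(4*C)) * norm (z - z') + (1/(4*C)) * norm (z - z')"
    proof -
      have "z \<in> cball z0 \<rho>F" "z' \<in> cball z0 \<rho>F" "z \<in> cball z0 \<rho>G" "z' \<in> cball z0 \<rho>G"
        using that by (auto simp: r_def)
      then show ?thesis using \<rho>F(2) \<rho>G(2) by (meson add_mono)
    qed
    finally show ?thesis by simp
  qed
  have lin: "bounded_linear (\<lambda>h. (F1 z0 h, G1 z0 h))"
    by (intro bounded_linear_Pair blinfun.bounded_linear_right)
  have "\<exists>z. (F z, G z) = (a, y) \<and> norm (z - c) \<le> 2 * C * norm ((a, y) - (F c, G c))"
    if "dist z0 c \<le> r/2" "2 * C * norm ((a, y) - (F c, G c)) \<le> r/2" for c a y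
    by (rule graves_local_solution[OF lin C op, where \<Phi>="\<lambda>z. (F z, G z)", OF strict that])
  moreover have "r > 0" using \<rho>F \<rho>G by (simp add: r_def)
  ultimately show ?thesis by auto
qed

section \<open>Second-order expansion along a parabola\<close>

lemma norm_blinfun_apply2_le:
  assumes "norm a \<le> N" "norm b \<le> N"
  shows "norm (blinfun_apply (blinfun_apply B a) b) \<le> norm B * N^2"
proof -
  have "norm (blinfun_apply (blinfun_apply B a) b) \<le> norm (blinfun_apply B a) * norm b"
    by (rule norm_blinfun)
  also have "\<dots> \<le> norm B * norm a * norm b"
    by (intro mult_right_mono norm_blinfun) auto
  also have "\<dots> \<le> norm B * N * N"
  proof -
    have "N \<ge> 0" using assms(1) norm_ge_zero[of a] by linarith
    then show ?thesis using assms by (intro mult_mono mult_left_mono) auto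
  qed
  finally show ?thesis by (simp add: power2_eq_square mult.assoc)
qed

lemma eventually_at_right_0_below:
  fixes P :: "real \<Rightarrow> bool"
  assumes ev: "\<forall>\<^sub>F s in at_right 0. P s" and P0: "P 0"
  shows "\<forall>\<^sub>F t in at_right 0. \<forall>s\<in>{0..t}. P s"
proof -
  obtain b where b: "b > 0" "\<And>s. 0 < s \<Longrightarrow> s < b \<Longrightarrow> P s"
    using ev unfolding eventually_at_right_field by blast
  have "P s" if "0 < t" "t < b" "s \<in> {0..t}" for t s
  proof (cases "s = 0")
    case True with P0 show ?thesis by simp
  next
    case False with that show ?thesis by (intro b(2)) auto
  qed
  then show ?thesis unfolding eventually_at_right_field using b(1) by blast
qed

lemma eventually_at_right_0_mult_le:
  assumes "c > 0"
  shows "\<forall>\<^sub>F t in at_right (0::real). K * t \<le> c"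
proof -
  have "((\<lambda>t. K * t) \<longlongrightarrow> K * 0) (at_right (0::real))" by (intro tendsto_intros)
  then have "\<forall>\<^sub>F t in at_right (0::real). K * t < c" by (rule order_tendstoD(2)) (use assms in simp)
  then show ?thesis by eventually_elim simp
qed

definition parabola :: "'a::real_vector \<Rightarrow> 'a \<Rightarrow> 'a \<Rightarrow> real \<Rightarrow> 'a" where
  "parabola z0 d w t = z0 + t *\<^sub>R d + (t^2/2) *\<^sub>R w"

lemma norm_parabola_diff_le:
  fixes z0 d w :: "'a::real_normed_vector"
  assumes t: "0 \<le> t" "t \<le> 1"
  shows "norm (parabola z0 d w t - z0) \<le> t * (norm d + norm w)"
proof -
  have "t^2/2 \<le> t"
    using t mult_left_le_one_le[of t t] by (simp add: power2_eq_square)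
  have "norm (parabola z0 d w t - z0) \<le> t * norm d + (t^2/2) * norm w"
    using t unfolding parabola_def by (simp add: norm_triangle_le)
  also have "(t^2/2) * norm w \<le> t * norm w"
    using \<open>t^2/2 \<le> t\<close> by (rule mult_right_mono) simp
  finally show ?thesis by (simp add: algebra_simps)
qed

lemma parabola_tendsto:
  fixes z0 d w :: "'a::real_normed_vector"
  shows "(parabola z0 d w \<longlongrightarrow> z0) (at_right 0)"
proof -
  have "((\<lambda>t. z0 + t *\<^sub>R d + (t^2/2) *\<^sub>R w) \<longlongrightarrow> z0 + 0 *\<^sub>R d + (0^2/2) *\<^sub>R w) (at_right 0)"
    by (intro tendsto_intros) simp
  then show ?thesis by (simp add: parabola_def[abs_def])
qed

lemma parabola_derivative_deviation_le:
  fixes f1 :: "'a::real_normed_vector \<Rightarrow> 'a \<Rightarrow>\<^sub>L 'b::real_normed_vector"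
    and f2 :: "'a \<Rightarrow>\<^sub>L 'a \<Rightarrow>\<^sub>L 'b"
  assumes s: "0 < s" "s \<le> 1" and N: "norm d + norm w \<le> N" and \<eta>: "\<eta> \<ge> 0"
    and R: "norm (f1 (parabola z0 d w s) - f1 z0 - f2 (parabola z0 d w s - z0))
      \<le> \<eta> * norm (parabola z0 d w s - z0)"
  shows "norm (f1 (parabola z0 d w s) (d + s *\<^sub>R w) - f1 z0 d - s *\<^sub>R (f1 z0 w + f2 d d))
    \<le> s * (\<eta> * N^2) + s * (s * (2 * norm f2 * N^2))"
proof -
  define h where "h = parabola z0 d w s - z0"
  define k where "k = d + s *\<^sub>R w"
  define R where "R = f1 (parabola z0 d w s) - f1 z0 - f2 h"
  define X where "X = f2 d w + (1/2) *\<^sub>R f2 w k"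
  have dw: "norm d \<le> N" "norm w \<le> N" "0 \<le> N" using N norm_ge_zero[of d] norm_ge_zero[of w] by linarith+
  have "norm h \<le> s * (norm d + norm w)"
    using norm_parabola_diff_le[of s z0 d w] s by (simp add: h_def)
  also have "\<dots> \<le> s * N" using N s by (intro mult_left_mono) auto
  finally have h: "norm h \<le> s * N" .
  have k: "norm k \<le> N"
    using norm_triangle_ineq[of d "s *\<^sub>R w"] mult_left_le_one_le[of "norm w" s] s N
    by (simp add: k_def)
  \<comment> \<open>bilinearity of f2 turns the second-order part into an \<open>O(s\<^sup>2)\<close> term\<close>
  have "f1 (parabola z0 d w s) k - f1 z0 d - s *\<^sub>R (f1 z0 w + f2 d d) = R k + s^2 *\<^sub>R X"
    unfolding R_def h_def k_def X_def parabola_def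
    by (simp add: blinfun.bilinear_simps algebra_simps power2_eq_square)
  then have "norm (f1 (parabola z0 d w s) k - f1 z0 d - s *\<^sub>R (f1 z0 w + f2 d d))
      \<le> norm (R k) + s^2 * norm X"
    using norm_triangle_ineq[of "R k" "s^2 *\<^sub>R X"] by simp
  also have "norm (R k) \<le> s * (\<eta> * N^2)"
  proof -
    have "norm (R k) \<le> norm R * N" using norm_blinfun[of R k] k by (meson mult_left_mono norm_ge_zero order_trans)
    also have "\<dots> \<le> (\<eta> * (s * N)) * N"
      using R h \<eta> dw by (intro mult_right_mono) (auto simp: R_def h_def intro: order_trans mult_left_mono)
    finally show ?thesis by (simp add: power2_eq_square algebra_simps)
  qed
  also have "s^2 * norm X \<le> s * (s * (2 * norm f2 * N^2))"
  proof -
    have "norm (f2 d w) \<le> norm f2 * N^2" "norm (f2 w k) \<le> norm f2 * N^2"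
      using dw k by (simp_all add: norm_blinfun_apply2_le)
    moreover have "norm X \<le> norm (f2 d w) + (1/2) * norm (f2 w k)"
      using norm_triangle_ineq[of "f2 d w" "(1/2) *\<^sub>R f2 w k"] by (simp add: X_def)
    moreover have "0 \<le> norm f2 * N^2" by simp
    ultimately have "norm X \<le> 2 * norm f2 * N^2" by linarith
    then show ?thesis using s by (simp add: power2_eq_square mult_left_mono)
  qed
  finally show ?thesis by (simp add: k_def)
qed

lemma parabola_derivative_deviation:
  fixes f1 :: "'a::real_normed_vector \<Rightarrow> 'a \<Rightarrow>\<^sub>L 'b::real_normed_vector"
    and f2 :: "'a \<Rightarrow>\<^sub>L 'a \<Rightarrow>\<^sub>L 'b"
  assumes der2: "(f1 has_derivative f2) (at z0)" and \<epsilon>: "\<epsilon> > 0"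
  shows "\<forall>\<^sub>F s in at_right 0.
    norm (f1 (parabola z0 d w s) (d + s *\<^sub>R w) - f1 z0 d - s *\<^sub>R (f1 z0 w + f2 d d)) \<le> \<epsilon> * s"
proof -
  define N where "N = norm d + norm w + 1"
  have N: "N > 0" "norm d + norm w \<le> N"
    unfolding N_def using norm_ge_zero[of d] norm_ge_zero[of w] by linarith+
  define \<eta> where "\<eta> = \<epsilon> / (2 * N^2)"
  have \<eta>: "\<eta> > 0" "\<eta> * N^2 = \<epsilon> / 2" using \<epsilon> N by (simp_all add: \<eta>_def)
  obtain \<delta> where \<delta>: "\<delta> > 0" "\<And>y. norm (y - z0) < \<delta> \<Longrightarrow>
      norm (f1 y - f1 z0 - f2 (y - z0)) \<le> \<eta> * norm (y - z0)"
    using der2 \<eta>(1) unfolding has_derivative_at_alt by blast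
  have "\<forall>\<^sub>F s in at_right 0. norm (parabola z0 d w s - z0) < \<delta>"
    using tendstoD[OF parabola_tendsto[of z0 d w] \<delta>(1)] by (simp add: dist_norm)
  moreover have "\<forall>\<^sub>F s in at_right 0. 0 < s \<and> s \<le> (1::real)"
    unfolding eventually_at_right_field by (intro exI[of _ 1]) auto
  moreover have "\<forall>\<^sub>F s in at_right 0. s * (2 * norm f2 * N^2) < \<epsilon> / 2"
  proof -
    have "((\<lambda>s. s * (2 * norm f2 * N^2)) \<longlongrightarrow> 0 * (2 * norm f2 * N^2)) (at_right 0)"
      by (intro tendsto_intros)
    then show ?thesis by (rule order_tendstoD(2)) (use \<epsilon> in simp)
  qed
  ultimately show ?thesis
  proof eventually_elim
    case (elim s)
    then have "norm (f1 (parabola z0 d w s) (d + s *\<^sub>R w) - f1 z0 d - s *\<^sub>R (f1 z0 w + f2 d d))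
        \<le> s * (\<eta> * N^2) + s * (s * (2 * norm f2 * N^2))"
      using \<delta>(2) \<eta>(1) N(2) by (intro parabola_derivative_deviation_le) auto
    also have "\<dots> \<le> s * (\<epsilon> / 2) + s * (\<epsilon> / 2)"
      using elim \<eta>(2) by (intro add_mono mult_left_mono) auto
    finally show ?case by simp
  qed
qed

lemma second_order_expansion_along_parabola:
  fixes f :: "'a::real_normed_vector \<Rightarrow> 'b::real_normed_vector" and f1 :: "'a \<Rightarrow> 'a \<Rightarrow>\<^sub>L 'b"
    and f2 :: "'a \<Rightarrow>\<^sub>L 'a \<Rightarrow>\<^sub>L 'b"
  assumes S: "open S" "z0 \<in> S" and der: "\<And>z. z \<in> S \<Longrightarrow> (f has_derivative f1 z) (at z)"
    and der2: "(f1 has_derivative f2) (at z0)" and \<epsilon>: "\<epsilon> > 0"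
  shows "\<forall>\<^sub>F t in at_right 0. norm (f (parabola z0 d w t) - f z0 - t *\<^sub>R f1 z0 d
           - (t^2/2) *\<^sub>R (f1 z0 w + f2 d d)) \<le> \<epsilon> * t^2"
proof -
  define D where "D s = f1 (parabola z0 d w s) (d + s *\<^sub>R w) - f1 z0 d - s *\<^sub>R (f1 z0 w + f2 d d)" for s
  define \<psi> where "\<psi> s = f (parabola z0 d w s) - s *\<^sub>R f1 z0 d - (s^2/2) *\<^sub>R (f1 z0 w + f2 d d)" for s
  have D0: "D 0 = 0" by (simp add: D_def parabola_def)
  have "\<forall>\<^sub>F s in at_right 0. parabola z0 d w s \<in> S \<and> norm (D s) \<le> \<epsilon> * s"
    using topological_tendstoD[OF parabola_tendsto S] parabola_derivative_deviation[OF der2 \<epsilon>, of d w]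
    unfolding D_def by (rule eventually_conj)
  then have "\<forall>\<^sub>F t in at_right 0. \<forall>s\<in>{0..t}. parabola z0 d w s \<in> S \<and> norm (D s) \<le> \<epsilon> * s"
    using S(2) D0 by (intro eventually_at_right_0_below) (simp_all add: parabola_def)
  with eventually_at_right_less[of 0] show ?thesis
  proof eventually_elim
    case (elim t)
    have "(\<psi> has_vector_derivative D s) (at s within {0..t})" if s: "s \<in> {0..t}" for s
    proof -
      have "(parabola z0 d w has_vector_derivative (d + s *\<^sub>R w)) (at s within {0..t})"
        unfolding parabola_def[abs_def]
        by (auto intro!: derivative_eq_intros simp: power2_eq_square algebra_simps)
      then have "(parabola z0 d w has_derivative (\<lambda>r. r *\<^sub>R (d + s *\<^sub>R w))) (at s within {0..t})"
        by (simp add: has_vector_derivative_def)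
      from has_derivative_compose[OF this der] elim s
      have "((\<lambda>s. f (parabola z0 d w s)) has_vector_derivative f1 (parabola z0 d w s) (d + s *\<^sub>R w))
          (at s within {0..t})"
        unfolding has_vector_derivative_def by (simp add: blinfun.scaleR_right)
      then show ?thesis unfolding \<psi>_def D_def
        by (auto intro!: derivative_eq_intros simp: power2_eq_square algebra_simps)
    qed
    moreover have "norm (D s - D 0) \<le> \<epsilon> * t" if "s \<in> {0..t}" for s
    proof -
      have "norm (D s) \<le> \<epsilon> * s" using elim that by blast
      also have "\<dots> \<le> \<epsilon> * t" using that \<epsilon> by (intro mult_left_mono) auto
      finally show ?thesis using D0 by simp
    qed
    ultimately have "norm (\<psi> t - \<psi> 0 - (t - 0) *\<^sub>R D 0) \<le> norm (t - 0) * (\<epsilon> * t)"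
      using elim by (intro vector_differentiable_bound_linearization[where S="{0..t}"])
        (auto simp: closed_segment_eq_real_ivl)
    then show ?case
      using elim D0 by (simp add: \<psi>_def parabola_def power2_eq_square algebra_simps)
  qed
qed

section \<open>No feasible second-order descent\<close>

lemma cone_of_diff_zero: "g \<in> Q \<Longrightarrow> 0 \<in> cone_of_diff Q g"
  unfolding cone_of_diff_def by (rule CollectI, rule exI[of _ g], rule exI[of _ 1]) simp

lemma cone_of_diff_self: "q \<in> Q \<Longrightarrow> q - g \<in> cone_of_diff Q g"
  unfolding cone_of_diff_def by (rule CollectI, rule exI[of _ q], rule exI[of _ 1]) simp

lemma cone_of_diff_combination:
  assumes Q: "convex Q" and x: "x \<in> cone_of_diff Q g" and y: "y \<in> cone_of_diff Q g"
    and a: "a \<ge> 0" and b: "b \<ge> 0" and ab: "a + b > 0"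
  shows "a *\<^sub>R x + b *\<^sub>R y \<in> cone_of_diff Q g"
proof -
  obtain q1 \<mu>1 where 1: "x = \<mu>1 *\<^sub>R (q1 - g)" "q1 \<in> Q" "\<mu>1 > 0"
    using x unfolding cone_of_diff_def by blast
  obtain q2 \<mu>2 where 2: "y = \<mu>2 *\<^sub>R (q2 - g)" "q2 \<in> Q" "\<mu>2 > 0"
    using y unfolding cone_of_diff_def by blast
  define m where "m = a * \<mu>1 + b * \<mu>2"
  have m: "m > 0"
    using a b ab 1 2 unfolding m_def
    by (metis add_nonneg_pos add_pos_nonneg mult_nonneg_nonneg mult_pos_pos order.order_iff_strict not_less_iff_gr_or_eq add.right_neutral less_le)
  define q where "q = (a * \<mu>1 / m) *\<^sub>R q1 + (b * \<mu>2 / m) *\<^sub>R q2"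
  have "q \<in> Q"
    unfolding q_def using Q 1 2 a b m
    by (intro convexD) (auto simp: m_def add_divide_distrib[symmetric])
  moreover have "a *\<^sub>R x + b *\<^sub>R y = m *\<^sub>R (q - g)"
  proof -
    have "m *\<^sub>R q = (a * \<mu>1) *\<^sub>R q1 + (b * \<mu>2) *\<^sub>R q2" using m by (simp add: q_def scaleR_add_right)
    then show ?thesis by (simp add: 1 2 m_def scaleR_diff_right algebra_simps)
  qed
  ultimately show ?thesis using m unfolding cone_of_diff_def by blast
qed

lemma cone_of_diff_scaleR:
  "convex Q \<Longrightarrow> x \<in> cone_of_diff Q g \<Longrightarrow> k > 0 \<Longrightarrow> k *\<^sub>R x \<in> cone_of_diff Q g"
  using cone_of_diff_combination[of Q x g x k 0] by simp

lemma convex_cone_of_diff: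
  assumes "convex Q"
  shows "convex (cone_of_diff Q g)"
  by (rule convexI) (simp add: cone_of_diff_combination[OF assms])

lemma convex_step_in_two_directions:
  assumes Q: "convex Q" "g \<in> Q" "q \<in> Q" "q' \<in> Q"
    and \<alpha>\<beta>: "\<alpha> \<ge> 0" "\<beta> \<ge> 0" "\<alpha> + \<beta> \<le> 1"
  shows "g + \<alpha> *\<^sub>R (q - g) + \<beta> *\<^sub>R (q' - g) \<in> Q"
proof (cases "\<alpha> + \<beta> = 0")
  case True
  then have "\<alpha> = 0" "\<beta> = 0" using \<alpha>\<beta> by auto
  then show ?thesis using Q by simp
next
  case False
  then have s: "\<alpha> + \<beta> > 0" using \<alpha>\<beta> by simp
  define p where "p = (\<alpha> / (\<alpha> + \<beta>)) *\<^sub>R q + (\<beta> / (\<alpha> + \<beta>)) *\<^sub>R q'"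
  have "p \<in> Q" unfolding p_def using Q \<alpha>\<beta> s by (intro convexD) (auto simp: add_divide_distrib[symmetric])
  then have "(1 - (\<alpha> + \<beta>)) *\<^sub>R g + (\<alpha> + \<beta>) *\<^sub>R p \<in> Q" using Q \<alpha>\<beta> s by (intro convexD) auto
  moreover have "(\<alpha> + \<beta>) *\<^sub>R p = \<alpha> *\<^sub>R q + \<beta> *\<^sub>R q'" using s by (simp add: p_def scaleR_add_right)
  ultimately show ?thesis by (simp add: algebra_simps)
qed

lemma eventually_second_order_step_in_convex:
  assumes Q: "convex Q" "g \<in> Q" and a: "a \<in> cone_of_diff Q g" and b: "b \<in> cone_of_diff Q g"
  shows "\<forall>\<^sub>F t in at_right 0. g + t *\<^sub>R a + (t^2/2) *\<^sub>R b \<in> Q"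
proof -
  obtain q \<mu> where q: "a = \<mu> *\<^sub>R (q - g)" "q \<in> Q" "\<mu> > 0"
    using a unfolding cone_of_diff_def by blast
  obtain q' \<nu> where q': "b = \<nu> *\<^sub>R (q' - g)" "q' \<in> Q" "\<nu> > 0"
    using b unfolding cone_of_diff_def by blast
  note eventually_at_right_less[of 0]
  moreover note eventually_at_right_0_mult_le[OF zero_less_one, of 1]
  moreover note eventually_at_right_0_mult_le[OF zero_less_one, of "\<mu> + \<nu>"]
  ultimately show ?thesis
  proof eventually_elim
    case (elim t)
    then have "t^2 \<le> t" using mult_left_le_one_le[of t t] by (simp add: power2_eq_square)
    then have "t^2 * \<nu> \<le> t * \<nu>" using q'(3) by (intro mult_right_mono) auto
    moreover have "(\<mu> + \<nu>) * t = t * \<mu> + t * \<nu>" "t * \<nu> > 0"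
      using elim q'(3) by (simp_all add: algebra_simps)
    ultimately have "t * \<mu> + t^2 * \<nu> / 2 \<le> 1" using elim by linarith
    then have "g + (t * \<mu>) *\<^sub>R (q - g) + (t^2 * \<nu> / 2) *\<^sub>R (q' - g) \<in> Q"
      using elim q q' by (intro convex_step_in_two_directions Q) auto
    then show ?case by (simp add: q(1) q'(1))
  qed
qed

lemma second_order_feasible_arc:
  fixes F :: "'a::banach \<Rightarrow> 'b::banach" and G :: "'a \<Rightarrow> 'c::banach"
    and F1 :: "'a \<Rightarrow> 'a \<Rightarrow>\<^sub>L 'b" and G1 :: "'a \<Rightarrow> 'a \<Rightarrow>\<^sub>L 'c"
    and F2 :: "'a \<Rightarrow>\<^sub>L 'a \<Rightarrow>\<^sub>L 'b" and G2 :: "'a \<Rightarrow>\<^sub>L 'a \<Rightarrow>\<^sub>L 'c"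
  assumes S: "open S" "z0 \<in> S"
    and dF: "\<And>z. z \<in> S \<Longrightarrow> (F has_derivative F1 z) (at z)" "(F1 has_derivative F2) (at z0)"
    and dG: "\<And>z. z \<in> S \<Longrightarrow> (G has_derivative G1 z) (at z)" "(G1 has_derivative G2) (at z0)"
    and C: "C > 0" and op: "open_with_constant C (\<lambda>h. (F1 z0 h, G1 z0 h))"
    and Q: "convex Q" "G z0 \<in> Q" and F0: "F z0 = 0"
    and d: "F1 z0 d = 0" "G1 z0 d \<in> cone_of_diff Q (G z0)"
    and w: "F1 z0 w + F2 d d = 0" "G1 z0 w + G2 d d \<in> cone_of_diff Q (G z0)"
    and \<kappa>: "\<kappa> > 0"
  shows "\<forall>\<^sub>F t in at_right 0. \<exists>z. F z = 0 \<and> G z \<in> Q \<and> norm (z - parabola z0 d w t) \<le> \<kappa> * t^2"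
proof -
  obtain r where r: "r > 0" "\<And>c a y. dist z0 c \<le> r/2 \<Longrightarrow> 2 * C * norm ((a, y) - (F c, G c)) \<le> r/2 \<Longrightarrow>
      \<exists>z. F z = a \<and> G z = y \<and> norm (z - c) \<le> 2 * C * norm ((a, y) - (F c, G c))"
    using metric_regularity_of_pair[OF S dF(1) has_derivative_continuous[OF dF(2)]
        dG(1) has_derivative_continuous[OF dG(2)] C op] by blast
  define \<tau> where "\<tau> = \<kappa> / (4 * C)"
  have \<tau>: "\<tau> > 0" using \<kappa> C by (simp add: \<tau>_def)
  define y where "y t = G z0 + t *\<^sub>R G1 z0 d + (t^2/2) *\<^sub>R (G1 z0 w + G2 d d)" for t
  \<comment> \<open>aiming G at its second-order Taylor polynomial leaves a Graves residual of order \<open>o(t\<^sup>2)\<close>\<close>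
  have "\<forall>\<^sub>F t in at_right 0. y t \<in> Q"
    unfolding y_def by (rule eventually_second_order_step_in_convex[OF Q d(2) w(2)])
  moreover have "\<forall>\<^sub>F t in at_right 0. dist z0 (parabola z0 d w t) \<le> r/2"
    using tendstoD[OF parabola_tendsto[of z0 d w], of "r/2"] r(1)
    by (auto elim: eventually_mono simp: dist_commute)
  moreover have "\<forall>\<^sub>F t in at_right 0. norm (F (parabola z0 d w t) - F z0 - t *\<^sub>R F1 z0 d
      - (t^2/2) *\<^sub>R (F1 z0 w + F2 d d)) \<le> \<tau> * t^2"
    by (rule second_order_expansion_along_parabola[OF S dF \<tau>])
  moreover have "\<forall>\<^sub>F t in at_right 0. norm (G (parabola z0 d w t) - G z0 - t *\<^sub>R G1 z0 d
      - (t^2/2) *\<^sub>R (G1 z0 w + G2 d d)) \<le> \<tau> * t^2"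
    by (rule second_order_expansion_along_parabola[OF S dG \<tau>])
  moreover note eventually_at_right_less[of 0]
  moreover note eventually_at_right_0_mult_le[OF zero_less_one, of 1]
  moreover note eventually_at_right_0_mult_le[OF half_gt_zero[OF r(1)], of \<kappa>]
  ultimately show ?thesis
  proof eventually_elim
    case (elim t)
    define c where "c = parabola z0 d w t"
    have "norm (F c) \<le> \<tau> * t^2" using elim by (simp add: c_def F0 d(1) w(1))
    moreover have "norm (y t - G c) \<le> \<tau> * t^2"
      using elim by (simp add: c_def y_def norm_minus_commute algebra_simps)
    ultimately have "2 * C * norm ((0, y t) - (F c, G c)) \<le> 2 * C * (2 * \<tau> * t^2)"
      using norm_Pair_le[of "- F c" "y t - G c"] C by (intro mult_left_mono) auto
    also have "\<dots> = \<kappa> * t^2" using C by (simp add: \<tau>_def)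
    finally have res: "2 * C * norm ((0, y t) - (F c, G c)) \<le> \<kappa> * t^2" .
    also have "\<dots> \<le> \<kappa> * t" using elim \<kappa> mult_left_le_one_le[of t t] by (simp add: power2_eq_square)
    finally have "2 * C * norm ((0, y t) - (F c, G c)) \<le> r/2" using elim by linarith
    then obtain z where "F z = 0" "G z = y t" "norm (z - c) \<le> 2 * C * norm ((0, y t) - (F c, G c))"
      using r(2)[of c 0 "y t"] elim by (auto simp: c_def)
    then show ?case using elim res unfolding c_def by (intro exI[of _ z]) auto
  qed
qed

lemma vec_nth_le_norm: "x $ i \<le> norm (x :: real^'n)"
  using component_le_norm_cart[of x i] by linarith

lemma vec_neg_uniform_bound:
  fixes P :: "real^'m::finite"
  assumes "\<forall>i. P $ i < 0"
  shows "\<exists>\<eta>>0. \<forall>i. P $ i \<le> - \<eta>"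
proof -
  have fin: "finite (range (\<lambda>i. - P $ i))" by simp
  have "Min (range (\<lambda>i. - P $ i)) > 0" using fin assms by (subst Min_gr_iff) auto
  moreover have "P $ i \<le> - Min (range (\<lambda>i. - P $ i))" for i
  proof -
    have "Min (range (\<lambda>i. - P $ i)) \<le> - P $ i" by (rule Min_le[OF fin]) simp
    then show ?thesis by linarith
  qed
  ultimately show ?thesis by blast
qed

lemma second_order_strict_descent:
  fixes I :: "'a::real_normed_vector \<Rightarrow> real^'m::finite" and I1 :: "'a \<Rightarrow> 'a \<Rightarrow>\<^sub>L (real^'m)"
    and I2 :: "'a \<Rightarrow>\<^sub>L 'a \<Rightarrow>\<^sub>L (real^'m)"
  assumes S: "open S" "z0 \<in> S"
    and dI: "\<And>z. z \<in> S \<Longrightarrow> (I has_derivative I1 z) (at z)" "(I1 has_derivative I2) (at z0)"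
    and d: "\<forall>i. (I1 z0 d) $ i \<le> 0" and w: "\<forall>i. (I1 z0 w + I2 d d) $ i < 0"
  shows "\<exists>\<kappa>>0. \<forall>\<^sub>F t in at_right 0. \<forall>z. norm (z - parabola z0 d w t) \<le> \<kappa> * t^2 \<longrightarrow>
           (\<forall>i. (I z - I z0) $ i < 0)"
proof -
  define P where "P = I1 z0 w + I2 d d"
  obtain \<eta> where \<eta>: "\<eta> > 0" "\<And>i. P $ i \<le> - \<eta>"
    using vec_neg_uniform_bound[of P] w by (auto simp: P_def)
  obtain \<rho> L where \<rho>: "\<rho> > 0" and L: "L > 0"
    and lip: "\<And>z z'. z \<in> cball z0 \<rho> \<Longrightarrow> z' \<in> cball z0 \<rho> \<Longrightarrow> norm (I z - I z') \<le> L * norm (z - z')"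
    using continuous_derivative_imp_local_lipschitz[OF S dI(1) has_derivative_continuous[OF dI(2)]] by blast
  define \<kappa> where "\<kappa> = \<eta> / (8 * L)"
  have \<kappa>: "\<kappa> > 0" using \<eta> L by (simp add: \<kappa>_def)
  have "\<eta> / 8 > 0" using \<eta> by simp
  have "\<forall>\<^sub>F t in at_right 0. dist z0 (parabola z0 d w t) \<le> \<rho>/2"
    using tendstoD[OF parabola_tendsto[of z0 d w], of "\<rho>/2"] \<rho>(1)
    by (auto elim: eventually_mono simp: dist_commute)
  moreover have "\<forall>\<^sub>F t in at_right 0. norm (I (parabola z0 d w t) - I z0 - t *\<^sub>R I1 z0 d
      - (t^2/2) *\<^sub>R P) \<le> \<eta> / 8 * t^2"
    unfolding P_def by (rule second_order_expansion_along_parabola[OF S dI \<open>\<eta> / 8 > 0\<close>])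
  moreover note eventually_at_right_less[of 0]
  moreover note eventually_at_right_0_mult_le[OF zero_less_one, of 1]
  moreover note eventually_at_right_0_mult_le[OF half_gt_zero[OF \<rho>(1)], of \<kappa>]
  ultimately have "\<forall>\<^sub>F t in at_right 0. \<forall>z. norm (z - parabola z0 d w t) \<le> \<kappa> * t^2 \<longrightarrow>
           (\<forall>i. (I z - I z0) $ i < 0)"
  proof eventually_elim
    case (elim t)
    define c where "c = parabola z0 d w t"
    have t: "0 < t" "t \<le> 1" "\<kappa> * t \<le> \<rho>/2" using elim by auto
    have tt: "t^2 \<le> t" using t mult_left_le_one_le[of t t] by (simp add: power2_eq_square)
    have c: "c \<in> cball z0 \<rho>" using elim \<rho>(1) by (simp add: c_def)
    \<comment> \<open>componentwise, \<open>I z - I z0\<close> splits into \<open>t I'(z0) d \<le> 0\<close>, \<open>(t\<^sup>2/2) P \<le> -\<eta> t\<^sup>2/2\<close>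
      and two errors of size at most \<open>\<eta> t\<^sup>2/8\<close>\<close>
    show ?case unfolding c_def[symmetric]
    proof (intro allI impI)
      fix z i assume z: "norm (z - c) \<le> \<kappa> * t^2"
      have "\<kappa> * t^2 \<le> \<kappa> * t" using tt \<kappa> by simp
      then have "dist z0 z \<le> dist z0 c + norm (z - c)"
        using dist_triangle[of z0 z c] by (simp add: dist_norm norm_minus_commute)
      then have "z \<in> cball z0 \<rho>" using elim z \<open>\<kappa> * t^2 \<le> \<kappa> * t\<close> t by (simp add: c_def)
      then have "norm (I z - I c) \<le> L * (\<kappa> * t^2)"
        using lip[OF _ c] z L by (meson mult_left_mono less_imp_le order_trans)
      also have "\<dots> = \<eta>/8 * t^2" using L by (simp add: \<kappa>_def)
      finally have "(I z - I c) $ i \<le> \<eta>/8 * t^2"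
        using vec_nth_le_norm[of "I z - I c" i] by linarith
      moreover have "(I c - I z0 - t *\<^sub>R I1 z0 d - (t^2/2) *\<^sub>R P) $ i \<le> \<eta>/8 * t^2"
        using elim unfolding c_def by (blast intro: order_trans[OF vec_nth_le_norm])
      moreover have "t * (I1 z0 d) $ i \<le> 0" using d t by (simp add: mult_nonneg_nonpos)
      moreover have "(t^2/2) * P $ i \<le> (t^2/2) * (- \<eta>)" using \<eta>(2)[of i] by (intro mult_left_mono) auto
      moreover have "(I z - I z0) $ i = (I z - I c) $ i + t * (I1 z0 d) $ i + (t^2/2) * P $ i
          + (I c - I z0 - t *\<^sub>R I1 z0 d - (t^2/2) *\<^sub>R P) $ i"
        by simp
      moreover have "\<eta> * t^2 > 0" "(t^2/2) * (- \<eta>) = - (\<eta> * t^2) / 2" "\<eta>/8 * t^2 = (\<eta> * t^2) / 8"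
        using \<eta>(1) t by simp_all
      ultimately show "(I z - I z0) $ i < 0" by linarith
    qed
  qed
  with \<kappa> show ?thesis by blast
qed

lemma no_feasible_second_order_descent:
  fixes I :: "'a::banach \<Rightarrow> real^'m::finite" and F :: "'a \<Rightarrow> 'b::banach" and G :: "'a \<Rightarrow> 'c::banach"
    and I1 :: "'a \<Rightarrow> 'a \<Rightarrow>\<^sub>L (real^'m)" and F1 :: "'a \<Rightarrow> 'a \<Rightarrow>\<^sub>L 'b" and G1 :: "'a \<Rightarrow> 'a \<Rightarrow>\<^sub>L 'c"
    and I2 :: "'a \<Rightarrow>\<^sub>L 'a \<Rightarrow>\<^sub>L (real^'m)" and F2 :: "'a \<Rightarrow>\<^sub>L 'a \<Rightarrow>\<^sub>L 'b"
    and G2 :: "'a \<Rightarrow>\<^sub>L 'a \<Rightarrow>\<^sub>L 'c"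
  assumes S: "open S" "z0 \<in> S"
    and dI: "\<And>z. z \<in> S \<Longrightarrow> (I has_derivative I1 z) (at z)" "(I1 has_derivative I2) (at z0)"
    and dF: "\<And>z. z \<in> S \<Longrightarrow> (F has_derivative F1 z) (at z)" "(F1 has_derivative F2) (at z0)"
    and dG: "\<And>z. z \<in> S \<Longrightarrow> (G has_derivative G1 z) (at z)" "(G1 has_derivative G2) (at z0)"
    and C: "C > 0" and op: "open_with_constant C (\<lambda>h. (F1 z0 h, G1 z0 h))"
    and Q: "convex Q" "G z0 \<in> Q" and F0: "F z0 = 0"
    and \<epsilon>: "\<epsilon> > 0"
    and opt: "\<And>z. F z = 0 \<Longrightarrow> G z \<in> Q \<Longrightarrow> norm (z - z0) \<le> \<epsilon> \<Longrightarrow> \<not> (\<forall>i. (I z - I z0) $ i < 0)"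
    and d: "\<forall>i. (I1 z0 d) $ i \<le> 0" "F1 z0 d = 0" "G1 z0 d \<in> cone_of_diff Q (G z0)"
    and w: "\<forall>i. (I1 z0 w + I2 d d) $ i < 0" "F1 z0 w + F2 d d = 0"
      "G1 z0 w + G2 d d \<in> cone_of_diff Q (G z0)"
  shows False
proof -
  obtain \<kappa> where \<kappa>: "\<kappa> > 0" and descent: "\<forall>\<^sub>F t in at_right 0. \<forall>z.
      norm (z - parabola z0 d w t) \<le> \<kappa> * t^2 \<longrightarrow> (\<forall>i. (I z - I z0) $ i < 0)"
    using second_order_strict_descent[OF S dI d(1) w(1)] by blast
  have "\<forall>\<^sub>F t in at_right 0. \<exists>z. F z = 0 \<and> G z \<in> Q \<and> norm (z - parabola z0 d w t) \<le> \<kappa> * t^2"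
    by (rule second_order_feasible_arc[OF S dF dG C op Q F0 d(2,3) w(2,3) \<kappa>])
  moreover note descent
  moreover note tendstoD[OF parabola_tendsto[of z0 d w] half_gt_zero[OF \<epsilon>]]
  moreover note eventually_at_right_0_mult_le[OF half_gt_zero[OF \<epsilon>], of \<kappa>]
  moreover note eventually_at_right_0_mult_le[OF zero_less_one, of 1]
  moreover note eventually_at_right_less[of 0]
  ultimately have "\<forall>\<^sub>F t in at_right (0::real). False"
  proof eventually_elim
    case (elim t)
    then obtain z where z: "F z = 0" "G z \<in> Q" "norm (z - parabola z0 d w t) \<le> \<kappa> * t^2" by blast
    have "t^2 \<le> t" using elim mult_left_le_one_le[of t t] by (simp add: power2_eq_square)
    then have "\<kappa> * t^2 \<le> \<epsilon> / 2" using elim \<kappa> by (meson mult_left_mono less_imp_le order_trans)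
    moreover have "norm (z - z0) \<le> norm (z - parabola z0 d w t) + dist (parabola z0 d w t) z0"
      using norm_triangle_ineq[of "z - parabola z0 d w t" "parabola z0 d w t - z0"]
      by (simp add: dist_norm)
    ultimately have "norm (z - z0) \<le> \<epsilon>" using elim z(3) by linarith
    then show False using opt[OF z(1,2)] elim z(3) by blast
  qed
  then show False by (simp add: eventually_False)
qed

section \<open>Lagrange multipliers\<close>

lemma nonneg_unit_separation_from_negative_orthant:
  fixes K :: "(real^'m::finite) set"
  assumes K: "convex K" "K \<noteq> {}" and disj: "\<And>x. x \<in> K \<Longrightarrow> \<not> (\<forall>i. x $ i < 0)"
  shows "\<exists>lam. (\<forall>i. lam $ i \<ge> 0) \<and> norm lam = 1 \<and> (\<forall>x\<in>K. lam \<bullet> x \<ge> 0)"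
proof -
  define N where "N = {x :: real^'m. \<forall>i. x $ i < 0}"
  have "convex {x :: real^'m. x $ i < 0}" for i
    using convex_halfspace_lt[of "axis i 1" 0] by (simp add: cart_eq_inner_axis inner_commute)
  then have "convex (\<Inter>i. {x :: real^'m. x $ i < 0})" by (rule convex_INT)
  moreover have "N = (\<Inter>i. {x. x $ i < 0})" by (auto simp: N_def)
  ultimately have "convex N" by simp
  moreover have "N \<noteq> {}" by (auto simp: N_def intro!: exI[of _ "- vec 1"])
  moreover have "N \<inter> K = {}" using disj by (auto simp: N_def)
  ultimately obtain a b where ab: "a \<noteq> 0" "\<And>x. x \<in> N \<Longrightarrow> a \<bullet> x \<le> b" "\<And>x. x \<in> K \<Longrightarrow> b \<le> a \<bullet> x"
    using separating_hyperplane_sets[of N K] K by metis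
  have b: "b \<ge> 0"
  proof (rule ccontr)
    assume "\<not> b \<ge> 0"
    define k where "k = (- b) / (\<bar>a \<bullet> vec 1\<bar> + 1)"
    have k: "k > 0" unfolding k_def using \<open>\<not> b \<ge> 0\<close> by (intro divide_pos_pos) auto
    have "(- k) *\<^sub>R vec 1 \<in> N" using k by (simp add: N_def)
    then have "a \<bullet> ((- k) *\<^sub>R vec 1) \<le> b" by (rule ab(2))
    moreover have "k * (\<bar>a \<bullet> vec 1\<bar> + 1) = - b" by (simp add: k_def)
    moreover have "k * (a \<bullet> vec 1) \<le> k * \<bar>a \<bullet> vec 1\<bar>" using k by (intro mult_left_mono) auto
    ultimately show False using k by (simp add: algebra_simps)
  qed
  have a: "a $ i \<ge> 0" for i
  proof (rule ccontr)
    assume ai: "\<not> a $ i \<ge> 0"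
    define k where "k = (b + \<bar>a \<bullet> vec 1\<bar> + 1) / (- a $ i)"
    have k: "k > 0" unfolding k_def using ai b by (intro divide_pos_pos) auto
    have "- vec 1 - k *\<^sub>R axis i 1 \<in> N" using k by (simp add: N_def axis_def)
    then have "a \<bullet> (- vec 1 - k *\<^sub>R axis i 1) \<le> b" by (rule ab(2))
    moreover have "a \<bullet> (- vec 1 - k *\<^sub>R axis i 1) = - (a \<bullet> vec 1) - k * a $ i"
      by (simp add: inner_diff_right inner_axis)
    moreover have "k * a $ i = - (b + \<bar>a \<bullet> vec 1\<bar> + 1)" using ai by (simp add: k_def)
    ultimately show False using abs_ge_self[of "a \<bullet> vec 1"] by linarith
  qed
  define lam where "lam = a /\<^sub>R norm a"
  have na: "norm a > 0" using ab(1) by simp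
  have "lam \<bullet> x \<ge> 0" if "x \<in> K" for x
    using ab(3)[OF that] b na by (simp add: lam_def)
  moreover have "\<forall>i. lam $ i \<ge> 0" "norm lam = 1" using a na by (simp_all add: lam_def)
  ultimately show ?thesis by blast
qed

lemma bounded_linear_factor_through_open:
  fixes A :: "'a::real_normed_vector \<Rightarrow> 'b::real_normed_vector" and \<phi> :: "'a \<Rightarrow> real"
  assumes linA: "bounded_linear A" and op: "open_with_constant C A"
    and lin\<phi>: "bounded_linear \<phi>" and ker: "\<And>x. A x = 0 \<Longrightarrow> \<phi> x = 0"
  shows "\<exists>L :: 'b \<Rightarrow>\<^sub>L real. \<forall>x. \<phi> x = L (A x)"
proof -
  interpret A: bounded_linear A by (rule linA)
  interpret \<phi>: bounded_linear \<phi> by (rule lin\<phi>)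
  obtain \<rho> where \<rho>: "\<And>y. A (\<rho> y) = y" "\<And>y. norm (\<rho> y) \<le> C * norm y"
    using op unfolding open_with_constant_def by metis
  define l where "l y = \<phi> (\<rho> y)" for y
  have key: "\<phi> x = l (A x)" for x
  proof -
    have "A (x - \<rho> (A x)) = 0" using \<rho> by (simp add: A.diff)
    then have "\<phi> (x - \<rho> (A x)) = 0" by (rule ker)
    then show ?thesis by (simp add: l_def \<phi>.diff)
  qed
  have "bounded_linear l"
  proof
    fix y1 y2 show "l (y1 + y2) = l y1 + l y2"
      using key[of "\<rho> y1 + \<rho> y2"] \<rho> by (simp add: A.add \<phi>.add l_def)
  next
    fix r y show "l (r *\<^sub>R y) = r *\<^sub>R l y"
      using key[of "r *\<^sub>R \<rho> y"] \<rho> by (simp add: A.scaleR \<phi>.scaleR l_def)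
  next
    obtain K where K: "K > 0" "\<And>x. norm (\<phi> x) \<le> norm x * K" using \<phi>.pos_bounded by blast
    have "norm (l y) \<le> norm y * (C * K)" for y
    proof -
      have "norm (l y) \<le> norm (\<rho> y) * K" using K by (simp add: l_def)
      also have "\<dots> \<le> (C * norm y) * K" using \<rho>(2) K by (intro mult_right_mono) auto
      finally show ?thesis by (simp add: algebra_simps)
    qed
    then show "\<exists>K. \<forall>y. norm (l y) \<le> norm y * K" by blast
  qed
  then have "\<forall>x. \<phi> x = Blinfun l (A x)" using key by (simp add: bounded_linear_Blinfun_apply)
  then show ?thesis by blast
qed

lemma blinfun_on_prod_split:
  fixes L :: "('a::real_normed_vector \<times> 'b::real_normed_vector) \<Rightarrow>\<^sub>L real"
  shows "\<exists>(v :: 'a \<Rightarrow>\<^sub>L real) (e :: 'b \<Rightarrow>\<^sub>L real). \<forall>x y. L (x, y) = v x + e y"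
proof -
  have lin1: "bounded_linear (\<lambda>a. L (a, 0))" and lin2: "bounded_linear (\<lambda>y. L (0, y))"
    by (auto intro!: bounded_linear_compose[OF blinfun.bounded_linear_right] bounded_linear_Pair
        bounded_linear_ident bounded_linear_zero)
  have "L (x, y) = Blinfun (\<lambda>a. L (a, 0)) x + Blinfun (\<lambda>y. L (0, y)) y" for x y
  proof -
    have "L (x, y) = L ((x, 0) + (0, y))" by simp
    also have "\<dots> = L (x, 0) + L (0, y)" by (rule blinfun.add_right)
    finally show ?thesis by (simp add: bounded_linear_Blinfun_apply[OF lin1] bounded_linear_Blinfun_apply[OF lin2])
  qed
  then show ?thesis by blast
qed

lemma lagrange_multipliers_for_weights:
  fixes I1 :: "'z::real_normed_vector \<Rightarrow>\<^sub>L (real^'m::finite)" and F1 :: "'z \<Rightarrow>\<^sub>L 'e0::real_normed_vector"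
    and G1 :: "'z \<Rightarrow>\<^sub>L 'e::real_normed_vector"
  assumes op: "open_with_constant C (\<lambda>h. (F1 h, G1 h))"
    and ker: "\<And>h. F1 h = 0 \<Longrightarrow> G1 h = 0 \<Longrightarrow> lam \<bullet> I1 h = 0"
  shows "\<exists>(v :: 'e0 \<Rightarrow>\<^sub>L real) (e :: 'e \<Rightarrow>\<^sub>L real). \<forall>h. lam \<bullet> I1 h + v (F1 h) + e (G1 h) = 0"
proof -
  have "\<exists>L :: ('e0 \<times> 'e) \<Rightarrow>\<^sub>L real. \<forall>h. - (lam \<bullet> I1 h) = L (F1 h, G1 h)"
  proof (rule bounded_linear_factor_through_open[OF _ op])
    show "bounded_linear (\<lambda>h. (F1 h, G1 h))"
      by (intro bounded_linear_Pair blinfun.bounded_linear_right)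
    show "bounded_linear (\<lambda>h. - (lam \<bullet> I1 h))"
      by (intro bounded_linear_minus bounded_linear_compose[OF bounded_linear_inner_right]
          blinfun.bounded_linear_right)
  qed (use ker in \<open>simp add: zero_prod_def\<close>)
  then obtain L :: "('e0 \<times> 'e) \<Rightarrow>\<^sub>L real" where L: "\<And>h. - (lam \<bullet> I1 h) = L (F1 h, G1 h)" by blast
  obtain v :: "'e0 \<Rightarrow>\<^sub>L real" and e :: "'e \<Rightarrow>\<^sub>L real" where "\<And>x y. L (x, y) = v x + e y"
    using blinfun_on_prod_split by blast
  with L have "\<forall>h. lam \<bullet> I1 h + v (F1 h) + e (G1 h) = 0" by (metis add.assoc add.right_inverse)
  then show ?thesis by blast
qed

lemma nonneg_of_nonneg_on_ray:
  fixes a b :: real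
  assumes "\<And>k. k > 0 \<Longrightarrow> 0 \<le> a + k * b"
  shows "0 \<le> b"
proof (rule ccontr)
  assume "\<not> 0 \<le> b"
  then have "0 \<le> a + ((\<bar>a\<bar> + 1) / - b) * b" by (intro assms divide_pos_pos) auto
  with \<open>\<not> 0 \<le> b\<close> show False by simp
qed

lemma multipliers_of_infeasible_linearization:
  fixes I1 :: "'z::real_normed_vector \<Rightarrow>\<^sub>L (real^'m::finite)" and F1 :: "'z \<Rightarrow>\<^sub>L 'e0::real_normed_vector"
    and G1 :: "'z \<Rightarrow>\<^sub>L 'e::real_normed_vector"
  assumes Q: "convex Q" "g \<in> Q" and op: "open_with_constant C (\<lambda>h. (F1 h, G1 h))"
    and infeasible: "\<And>w. F1 w + b = 0 \<Longrightarrow> G1 w + c \<in> cone_of_diff Q g \<Longrightarrow> \<not> (\<forall>i. (I1 w + a) $ i < 0)"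
  shows "\<exists>lam (v :: 'e0 \<Rightarrow>\<^sub>L real) (e :: 'e \<Rightarrow>\<^sub>L real).
           (lam, v, e) \<in> Lambda2 I1 F1 G1 Q g \<and> lam \<bullet> a + v b + e c \<ge> 0"
proof -
  let ?K = "cone_of_diff Q g"
  define W where "W = {w. F1 w + b = 0 \<and> G1 w + c \<in> ?K}"
  obtain w0 where w0: "F1 w0 = - b" "G1 w0 = - c"
    using op unfolding open_with_constant_def by (metis prod.inject)
  have w0W: "w0 \<in> W" using w0 cone_of_diff_zero[OF Q(2)] by (simp add: W_def)
  have "W = (\<lambda>w. (F1 w, G1 w)) -` ({- b} \<times> (\<lambda>x. x - c) ` ?K)"
    by (force simp: W_def eq_neg_iff_add_eq_0)
  moreover have "linear (\<lambda>w. (F1 w, G1 w))"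
    by (intro bounded_linear.linear bounded_linear_Pair blinfun.bounded_linear_right)
  ultimately have "convex W"
    by (simp add: convex_linear_vimage convex_Times convex_translation_subtract convex_cone_of_diff Q(1))
  moreover have "(\<lambda>w. I1 w + a) ` W = (+) a ` (I1 ` W)" by (auto simp: add.commute)
  ultimately have "convex ((\<lambda>w. I1 w + a) ` W)"
    by (simp add: convex_translation convex_linear_image bounded_linear.linear[OF blinfun.bounded_linear_right])
  moreover have "\<not> (\<forall>i. x $ i < 0)" if "x \<in> (\<lambda>w. I1 w + a) ` W" for x
    using that infeasible by (auto simp: W_def)
  ultimately obtain lam where lam: "\<forall>i. lam $ i \<ge> 0" "norm lam = 1"
      "\<And>w. w \<in> W \<Longrightarrow> lam \<bullet> (I1 w + a) \<ge> 0"
    using nonneg_unit_separation_from_negative_orthant[of "(\<lambda>w. I1 w + a) ` W"] w0W by blast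
  \<comment> \<open>W contains the ray from w0 in every direction of the linearized feasible cone\<close>
  have nonneg: "lam \<bullet> I1 h \<ge> 0" if h: "F1 h = 0" "G1 h \<in> ?K" for h
  proof (rule nonneg_of_nonneg_on_ray)
    fix k :: real assume k: "k > 0"
    have "w0 + k *\<^sub>R h \<in> W"
      using w0 h cone_of_diff_scaleR[OF Q(1) h(2) k]
      by (simp add: W_def blinfun.add_right blinfun.scaleR_right)
    then have "lam \<bullet> (I1 (w0 + k *\<^sub>R h) + a) \<ge> 0" by (rule lam(3))
    then show "0 \<le> lam \<bullet> (I1 w0 + a) + k * (lam \<bullet> I1 h)"
      by (simp add: blinfun.add_right blinfun.scaleR_right inner_add_right algebra_simps)
  qed
  have "lam \<bullet> I1 h = 0" if "F1 h = 0" "G1 h = 0" for h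
    using nonneg[of h] nonneg[of "- h"] that cone_of_diff_zero[OF Q(2)]
    by (simp add: blinfun.minus_right)
  then obtain v :: "'e0 \<Rightarrow>\<^sub>L real" and e :: "'e \<Rightarrow>\<^sub>L real"
    where lag: "\<And>h. lam \<bullet> I1 h + v (F1 h) + e (G1 h) = 0"
    using lagrange_multipliers_for_weights[OF op] by blast
  have "e \<in> normal_cone_cvx Q g"
    unfolding normal_cone_cvx_def
  proof (intro CollectI ballI)
    fix q assume "q \<in> Q"
    obtain h where h: "F1 h = 0" "G1 h = q - g"
      using op unfolding open_with_constant_def by (metis prod.inject)
    have "lam \<bullet> I1 h \<ge> 0" using nonneg h cone_of_diff_self[OF \<open>q \<in> Q\<close>] by simp
    then show "e (q - g) \<le> 0" using lag[of h] h by simp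
  qed
  moreover have "lam \<bullet> a + v b + e c = lam \<bullet> (I1 w0 + a)"
    using lag[of w0] w0 by (simp add: inner_add_right blinfun.minus_right algebra_simps)
  moreover have "lam \<bullet> (I1 w0 + a) \<ge> 0" using lam(3)[OF w0W] .
  ultimately have "(lam, v, e) \<in> Lambda2 I1 F1 G1 Q g" "lam \<bullet> a + v b + e c \<ge> 0"
    using lam(1,2) lag by (simp_all add: Lambda2_def)
  then show ?thesis by blast
qed

lemma lagrange_multipliers_dist_le:
  fixes I1 :: "'z::real_normed_vector \<Rightarrow>\<^sub>L (real^'m::finite)" and F1 :: "'z \<Rightarrow>\<^sub>L 'e0::real_normed_vector"
    and G1 :: "'z \<Rightarrow>\<^sub>L 'e::real_normed_vector"
  assumes C: "C \<ge> 0" and op: "open_with_constant C (\<lambda>h. (F1 h, G1 h))"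
    and l1: "\<And>h. l1 \<bullet> I1 h + blinfun_apply v1 (F1 h) + blinfun_apply e1 (G1 h) = 0"
    and l2: "\<And>h. l2 \<bullet> I1 h + blinfun_apply v2 (F1 h) + blinfun_apply e2 (G1 h) = 0"
  shows "norm (v1 - v2) \<le> C * norm I1 * norm (l1 - l2)" "norm (e1 - e2) \<le> C * norm I1 * norm (l1 - l2)"
proof -
  have key: "\<bar>(v1 - v2) a + (e1 - e2) y\<bar> \<le> C * norm I1 * norm (l1 - l2) * norm (a, y)" for a y
  proof -
    obtain h where h: "F1 h = a" "G1 h = y" "norm h \<le> C * norm (a, y)"
      using op unfolding open_with_constant_def by (metis prod.inject)
    have "(v1 - v2) a + (e1 - e2) y = - ((l1 - l2) \<bullet> I1 h)"
      using l1[of h] l2[of h] h by (simp add: blinfun.diff_left inner_diff_left algebra_simps)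
    then have "\<bar>(v1 - v2) a + (e1 - e2) y\<bar> \<le> norm (l1 - l2) * norm (I1 h)"
      using Cauchy_Schwarz_ineq2[of "l1 - l2" "I1 h"] by simp
    also have "\<dots> \<le> norm (l1 - l2) * (norm I1 * (C * norm (a, y)))"
      using norm_blinfun[of I1 h] mult_left_mono[OF h(3) norm_ge_zero[of I1]]
      by (intro mult_left_mono) auto
    finally show ?thesis by (simp add: algebra_simps)
  qed
  show "norm (v1 - v2) \<le> C * norm I1 * norm (l1 - l2)"
    using key[of _ 0] C by (intro norm_blinfun_bound) (auto simp: norm_Pair)
  show "norm (e1 - e2) \<le> C * norm I1 * norm (l1 - l2)"
    using key[of 0] C by (intro norm_blinfun_bound) (auto simp: norm_Pair)
qed

lemma seq_compact_Lambda2: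
  fixes I1 :: "'z::real_normed_vector \<Rightarrow>\<^sub>L (real^'m::finite)" and F1 :: "'z \<Rightarrow>\<^sub>L 'e0::real_normed_vector"
    and G1 :: "'z \<Rightarrow>\<^sub>L 'e::real_normed_vector"
  assumes C: "C \<ge> 0" and op: "open_with_constant C (\<lambda>h. (F1 h, G1 h))"
  shows "seq_compact (Lambda2 I1 F1 G1 Q g)"
  unfolding seq_compact_def
proof (intro allI impI)
  fix M :: "nat \<Rightarrow> (real^'m) \<times> ('e0 \<Rightarrow>\<^sub>L real) \<times> ('e \<Rightarrow>\<^sub>L real)"
  assume M_in: "\<forall>n. M n \<in> Lambda2 I1 F1 G1 Q g"
  define ln where "ln n = fst (M n)" for n
  define vn where "vn n = fst (snd (M n))" for n
  define en where "en n = snd (snd (M n))" for n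
  have M: "M n = (ln n, vn n, en n)" for n by (simp add: ln_def vn_def en_def)
  have Mn: "\<forall>i. ln n $ i \<ge> 0" "norm (ln n) = 1"
      "\<And>h. ln n \<bullet> I1 h + vn n (F1 h) + en n (G1 h) = 0" "en n \<in> normal_cone_cvx Q g" for n
    using M_in[rule_format, of n] unfolding M by (simp_all add: Lambda2_def)
  have "seq_compact (sphere (0::real^'m) 1)" by (rule compact_imp_seq_compact) simp
  moreover have "\<forall>n. ln n \<in> sphere 0 1" using Mn(2) by simp
  ultimately obtain l r where "l \<in> sphere 0 1" "strict_mono r" "(ln \<circ> r) \<longlonglongrightarrow> l"
    by (rule seq_compactE)
  then have l: "norm l = 1" "strict_mono r" "(\<lambda>n. ln (r n)) \<longlonglongrightarrow> l" by (simp_all add: comp_def)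
  have "l $ i \<ge> 0" for i
  proof (rule LIMSEQ_le_const)
    show "(\<lambda>n. ln (r n) $ i) \<longlonglongrightarrow> l $ i" using l(3) by (intro tendsto_intros)
  qed (use Mn(1) in auto)
  moreover have "l \<bullet> I1 h = 0" if "F1 h = 0" "G1 h = 0" for h
  proof (rule LIMSEQ_unique)
    show "(\<lambda>n. ln (r n) \<bullet> I1 h) \<longlonglongrightarrow> l \<bullet> I1 h" using l(3) by (intro tendsto_intros)
    show "(\<lambda>n. ln (r n) \<bullet> I1 h) \<longlonglongrightarrow> 0" using Mn(3)[of _ h] that by simp
  qed
  then obtain v :: "'e0 \<Rightarrow>\<^sub>L real" and e :: "'e \<Rightarrow>\<^sub>L real"
    where lag: "\<And>h. l \<bullet> I1 h + v (F1 h) + e (G1 h) = 0"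
    using lagrange_multipliers_for_weights[OF op] by blast
  have small: "(\<lambda>n. C * norm I1 * norm (ln (r n) - l)) \<longlonglongrightarrow> 0"
    using tendsto_mult_right_zero[OF tendsto_norm_zero[OF LIM_zero[OF l(3)]]] by simp
  have "(\<lambda>n. vn (r n) - v) \<longlonglongrightarrow> 0"
    by (rule Lim_null_comparison[OF always_eventually small])
      (use lagrange_multipliers_dist_le(1)[OF C op Mn(3) lag] in blast)
  then have v_lim: "(\<lambda>n. vn (r n)) \<longlonglongrightarrow> v" by (rule LIM_zero_cancel)
  have "(\<lambda>n. en (r n) - e) \<longlonglongrightarrow> 0"
    by (rule Lim_null_comparison[OF always_eventually small])
      (use lagrange_multipliers_dist_le(2)[OF C op Mn(3) lag] in blast)
  then have e_lim: "(\<lambda>n. en (r n)) \<longlonglongrightarrow> e" by (rule LIM_zero_cancel)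
  have "e \<in> normal_cone_cvx Q g"
    unfolding normal_cone_cvx_def
  proof (intro CollectI ballI)
    fix q assume q: "q \<in> Q"
    have "(\<lambda>n. en (r n) (q - g)) \<longlonglongrightarrow> e (q - g)" using e_lim by (intro tendsto_intros)
    then show "e (q - g) \<le> 0"
      by (rule LIMSEQ_le_const2) (use Mn(4) q in \<open>auto simp: normal_cone_cvx_def\<close>)
  qed
  ultimately have "(l, v, e) \<in> Lambda2 I1 F1 G1 Q g" using l(1) lag by (simp add: Lambda2_def)
  moreover have "(M \<circ> r) \<longlonglongrightarrow> (l, v, e)"
    unfolding comp_def M by (intro tendsto_Pair l(3) v_lim e_lim)
  ultimately show "\<exists>L\<in>Lambda2 I1 F1 G1 Q g. \<exists>r. strict_mono r \<and> (M \<circ> r) \<longlonglongrightarrow> L"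
    using l(2) by blast
qed

lemma closure_preserves_nonneg_witness:
  fixes \<Phi> :: "'a::metric_space \<times> 'b::metric_space \<Rightarrow> real"
  assumes K: "seq_compact K" and cont: "\<And>p. isCont \<Phi> p"
    and X: "\<And>x. x \<in> X \<Longrightarrow> \<exists>k\<in>K. \<Phi> (k, x) \<ge> 0" and x: "x \<in> closure X"
  shows "\<exists>k\<in>K. \<Phi> (k, x) \<ge> 0"
proof -
  obtain xs where xs: "\<And>n. xs n \<in> X" "xs \<longlonglongrightarrow> x" using x unfolding closure_sequential by blast
  obtain ks where ks: "\<And>n. ks n \<in> K" "\<And>n. \<Phi> (ks n, xs n) \<ge> 0" using X[OF xs(1)] by metis
  obtain k r where k: "k \<in> K" "strict_mono r" "(ks \<circ> r) \<longlonglongrightarrow> k" using K ks(1) by (metis seq_compactE)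
  have "(\<lambda>n. (ks (r n), xs (r n))) \<longlonglongrightarrow> (k, x)"
    using k(3) LIMSEQ_subseq_LIMSEQ[OF xs(2) k(2)] by (intro tendsto_Pair) (simp_all add: comp_def)
  then have "(\<lambda>n. \<Phi> (ks (r n), xs (r n))) \<longlonglongrightarrow> \<Phi> (k, x)" by (rule isCont_tendsto_compose[OF cont])
  then have "\<Phi> (k, x) \<ge> 0" by (rule LIMSEQ_le_const) (use ks(2) in blast)
  with k(1) show ?thesis by blast
qed

section \<open>The second-order necessary condition\<close>

lemma contingent_cone_zero_set_subset_kernel:
  fixes F :: "'a::real_normed_vector \<Rightarrow> 'b::real_normed_vector"
  assumes der: "(F has_derivative blinfun_apply F1) (at z0)" and F0: "F z0 = 0"
    and k: "k \<in> contingent_cone {z. F z = 0} z0"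
  shows "F1 k = 0"
proof -
  obtain t hs where th: "\<And>n. t n > 0" "t \<longlonglongrightarrow> 0" "hs \<longlonglongrightarrow> k" "\<And>n. F (z0 + t n *\<^sub>R hs n) = 0"
    using k unfolding contingent_cone_def by blast
  have bound: "norm (F1 k) \<le> \<epsilon> * norm k" if \<epsilon>: "\<epsilon> > 0" for \<epsilon>
  proof -
    obtain \<delta> where \<delta>: "\<delta> > 0" "\<And>y. norm (y - z0) < \<delta> \<Longrightarrow> norm (F y - F z0 - F1 (y - z0)) \<le> \<epsilon> * norm (y - z0)"
      using der \<epsilon> unfolding has_derivative_at_alt by blast
    have "(\<lambda>n. t n *\<^sub>R hs n) \<longlonglongrightarrow> 0 *\<^sub>R k" using th by (intro tendsto_intros)
    then have "\<forall>\<^sub>F n in sequentially. norm (t n *\<^sub>R hs n) < \<delta>"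
      using \<delta>(1) by (simp add: tendsto_norm_zero_iff[symmetric] order_tendsto_iff)
    then have "\<forall>\<^sub>F n in sequentially. norm (F1 (hs n)) \<le> \<epsilon> * norm (hs n)"
    proof eventually_elim
      case (elim n)
      then have "t n * norm (F1 (hs n)) \<le> t n * (\<epsilon> * norm (hs n))"
        using \<delta>(2)[of "z0 + t n *\<^sub>R hs n"] th(1)[of n] th(4)[of n] F0 by (simp add: blinfun.scaleR_right)
      then show ?case using th(1)[of n] by simp
    qed
    then show ?thesis
      by (rule tendsto_le[OF trivial_limit_sequentially, rotated -1]) (intro tendsto_intros th(3))+
  qed
  show ?thesis
  proof (rule ccontr)
    assume "F1 k \<noteq> 0"
    then have "norm k > 0" by (metis blinfun.zero_right zero_less_norm_iff)
    then have "norm (F1 k) \<le> norm (F1 k) / 2"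
      using bound[of "norm (F1 k) / (2 * norm k)"] \<open>F1 k \<noteq> 0\<close> by simp
    with \<open>F1 k \<noteq> 0\<close> show False by simp
  qed
qed

lemma surj_pair_of_partial_surj:
  fixes F1 :: "('x::real_normed_vector \<times> 'u::real_normed_vector) \<Rightarrow>\<^sub>L 'e0::real_normed_vector"
    and G1 :: "('x \<times> 'u) \<Rightarrow>\<^sub>L 'e::real_normed_vector"
  assumes Fx: "surj (\<lambda>h. blinfun_apply F1 (h, 0))" and GT: "blinfun_apply G1 ` T = UNIV"
    and T: "\<And>k. k \<in> T \<Longrightarrow> F1 k = 0"
  shows "surj (\<lambda>h. (blinfun_apply F1 h, blinfun_apply G1 h))"
proof -
  have "\<exists>h. p = (F1 h, G1 h)" for p :: "'e0 \<times> 'e"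
  proof -
    from Fx obtain hx where hx: "fst p = F1 (hx, 0)" unfolding surj_def by blast
    have "snd p - G1 (hx, 0) \<in> blinfun_apply G1 ` T" using GT by simp
    then obtain k where k: "k \<in> T" "snd p - G1 (hx, 0) = G1 k" by blast
    have "p = (F1 ((hx, 0) + k), G1 ((hx, 0) + k))"
      using hx k(2)[symmetric] T[OF k(1)] by (simp add: blinfun.add_right prod_eq_iff)
    then show ?thesis by blast
  qed
  then show ?thesis unfolding surj_def by blast
qed

lemma C2_onD:
  assumes "C2_on S f f1 f2" "z \<in> S"
  shows "(f has_derivative f1 z) (at z)" "(f1 has_derivative f2 z) (at z)"
  using assms unfolding C2_on_def by auto

lemma loc_weak_pareto_normD:
  assumes "loc_weak_pareto I F G Q (x0, u0)"
  shows "\<exists>\<epsilon>>0. \<forall>z. F z = 0 \<longrightarrow> G z \<in> Q \<longrightarrow> norm (z - (x0, u0)) \<le> \<epsilon>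
           \<longrightarrow> \<not> (\<forall>i. (I z - I (x0, u0)) $ i < 0)"
proof -
  obtain \<epsilon> where \<epsilon>: "\<epsilon> > 0" and opt: "\<And>x u. F (x, u) = 0 \<Longrightarrow> G (x, u) \<in> Q
      \<Longrightarrow> norm (x - x0) \<le> \<epsilon> \<Longrightarrow> norm (u - u0) \<le> \<epsilon> \<Longrightarrow> \<not> (\<forall>i. (I (x, u) - I (x0, u0)) $ i < 0)"
    using assms unfolding loc_weak_pareto_def by auto
  have "norm (x - x0) \<le> norm ((x, u) - (x0, u0))" "norm (u - u0) \<le> norm ((x, u) - (x0, u0))" for x u
    using norm_fst_le[of "x - x0" "u - u0"] norm_snd_le[of "u - u0" "x - x0"] by simp_all
  with \<epsilon> opt show ?thesis by (metis order_trans surj_pair)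
qed

theorem second_order_multiplier_rule:
  fixes I :: "'z::banach \<Rightarrow> real^'m::finite" and F :: "'z \<Rightarrow> 'e0::banach" and G :: "'z \<Rightarrow> 'e::banach"
    and I1 :: "'z \<Rightarrow> 'z \<Rightarrow>\<^sub>L (real^'m)" and I2 :: "'z \<Rightarrow> 'z \<Rightarrow>\<^sub>L 'z \<Rightarrow>\<^sub>L (real^'m)"
    and F1 :: "'z \<Rightarrow> 'z \<Rightarrow>\<^sub>L 'e0" and F2 :: "'z \<Rightarrow> 'z \<Rightarrow>\<^sub>L 'z \<Rightarrow>\<^sub>L 'e0"
    and G1 :: "'z \<Rightarrow> 'z \<Rightarrow>\<^sub>L 'e" and G2 :: "'z \<Rightarrow> 'z \<Rightarrow>\<^sub>L 'z \<Rightarrow>\<^sub>L 'e"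
  assumes S: "open S" "z0 \<in> S"
    and dI: "\<And>z. z \<in> S \<Longrightarrow> (I has_derivative I1 z) (at z)" "(I1 has_derivative I2 z0) (at z0)"
    and dF: "\<And>z. z \<in> S \<Longrightarrow> (F has_derivative F1 z) (at z)" "(F1 has_derivative F2 z0) (at z0)"
    and dG: "\<And>z. z \<in> S \<Longrightarrow> (G has_derivative G1 z) (at z)" "(G1 has_derivative G2 z0) (at z0)"
    and Q: "convex Q" "G z0 \<in> Q" and F0: "F z0 = 0"
    and surj: "surj (\<lambda>h. (blinfun_apply (F1 z0) h, blinfun_apply (G1 z0) h))"
    and \<epsilon>: "\<epsilon> > 0"
    and opt: "\<And>z. F z = 0 \<Longrightarrow> G z \<in> Q \<Longrightarrow> norm (z - z0) \<le> \<epsilon> \<Longrightarrow> \<not> (\<forall>i. (I z - I z0) $ i < 0)"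
    and d: "d \<in> crit_cone (I1 z0) (F1 z0) (G1 z0) Q (G z0)"
  shows "\<exists>(lam, v, e) \<in> Lambda2 (I1 z0) (F1 z0) (G1 z0) Q (G z0).
           lam \<bullet> I2 z0 d d + blinfun_apply v (F2 z0 d d) + blinfun_apply e (G2 z0 d d) \<ge> 0"
proof -
  let ?\<Lambda> = "Lambda2 (I1 z0) (F1 z0) (G1 z0) Q (G z0)"
  define \<Phi> :: "((real^'m) \<times> ('e0 \<Rightarrow>\<^sub>L real) \<times> ('e \<Rightarrow>\<^sub>L real)) \<times> 'z \<Rightarrow> real"
    where "\<Phi> p = fst (fst p) \<bullet> I2 z0 (snd p) (snd p)
      + blinfun_apply (fst (snd (fst p))) (F2 z0 (snd p) (snd p))
      + blinfun_apply (snd (snd (fst p))) (G2 z0 (snd p) (snd p))" for p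
  define X where "X = {d. (\<forall>i. (I1 z0 d) $ i \<le> 0) \<and> F1 z0 d = 0 \<and> G1 z0 d \<in> cone_of_diff Q (G z0)}"
  have "bounded_linear (\<lambda>h. (F1 z0 h, G1 z0 h))"
    by (intro bounded_linear_Pair blinfun.bounded_linear_right)
  then obtain C where C: "C > 0" "open_with_constant C (\<lambda>h. (F1 z0 h, G1 z0 h))"
    using open_mapping_with_constant surj by blast
  have "\<exists>\<mu>\<in>?\<Lambda>. \<Phi> (\<mu>, d') \<ge> 0" if "d' \<in> X" for d'
  proof -
    have d': "\<forall>i. (I1 z0 d') $ i \<le> 0" "F1 z0 d' = 0" "G1 z0 d' \<in> cone_of_diff Q (G z0)"
      using that by (simp_all add: X_def)
    have "\<not> (\<forall>i. (I1 z0 w + I2 z0 d' d') $ i < 0)"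
      if "F1 z0 w + F2 z0 d' d' = 0" "G1 z0 w + G2 z0 d' d' \<in> cone_of_diff Q (G z0)" for w
      using no_feasible_second_order_descent[OF S dI dF dG C Q F0 \<epsilon> opt d', of w] that by blast
    then obtain lam v e where "(lam, v, e) \<in> ?\<Lambda>"
      "lam \<bullet> I2 z0 d' d' + blinfun_apply v (F2 z0 d' d') + blinfun_apply e (G2 z0 d' d') \<ge> 0"
      using multipliers_of_infeasible_linearization[OF Q C(2)] by blast
    then show ?thesis by (intro bexI[of _ "(lam, v, e)"]) (simp_all add: \<Phi>_def)
  qed
  moreover have "seq_compact ?\<Lambda>" using C by (intro seq_compact_Lambda2[of C]) auto
  moreover have "isCont \<Phi> p" for p unfolding \<Phi>_def by (intro continuous_intros)
  moreover have "d \<in> closure X" using d unfolding crit_cone_def X_def .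
  ultimately have "\<exists>\<mu>\<in>?\<Lambda>. \<Phi> (\<mu>, d) \<ge> 0"
    by (intro closure_preserves_nonneg_witness[of ?\<Lambda> \<Phi> X d])
  then obtain lam v e where "(lam, v, e) \<in> ?\<Lambda>" "\<Phi> ((lam, v, e), d) \<ge> 0"
    by (metis prod_cases3)
  then show ?thesis by (intro bexI[of _ "(lam, v, e)"]) (simp_all add: \<Phi>_def)
qed

theorem theorem4p1:
  fixes I :: "'x::banach \<times> 'u::banach \<Rightarrow> real^'m::finite"
    and F :: "'x \<times> 'u \<Rightarrow> 'e0::banach"
    and G :: "'x \<times> 'u \<Rightarrow> 'e::banach"
    and I1 :: "'x \<times> 'u \<Rightarrow> ('x \<times> 'u) \<Rightarrow>\<^sub>L (real^'m)"
    and I2 :: "'x \<times> 'u \<Rightarrow> ('x \<times> 'u) \<Rightarrow>\<^sub>L ('x \<times> 'u) \<Rightarrow>\<^sub>L (real^'m)"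
    and F1 :: "'x \<times> 'u \<Rightarrow> ('x \<times> 'u) \<Rightarrow>\<^sub>L 'e0"
    and F2 :: "'x \<times> 'u \<Rightarrow> ('x \<times> 'u) \<Rightarrow>\<^sub>L ('x \<times> 'u) \<Rightarrow>\<^sub>L 'e0"
    and G1 :: "'x \<times> 'u \<Rightarrow> ('x \<times> 'u) \<Rightarrow>\<^sub>L 'e"
    and G2 :: "'x \<times> 'u \<Rightarrow> ('x \<times> 'u) \<Rightarrow>\<^sub>L ('x \<times> 'u) \<Rightarrow>\<^sub>L 'e"
    and Q :: "'e set" and x0 :: 'x and u0 :: 'u and r1 r1' :: real
  assumes Q: "Q \<noteq> {}" "closed Q" "convex Q"
    and feas: "F (x0, u0) = 0" "G (x0, u0) \<in> Q"
    and r: "r1 > 0" "r1' > 0"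
    and A1: "C2_on (ball x0 r1 \<times> ball u0 r1') I I1 I2"
            "C2_on (ball x0 r1 \<times> ball u0 r1') F F1 F2"
            "C2_on (ball x0 r1 \<times> ball u0 r1') G G1 G2"
    and A2: "bij (\<lambda>h. blinfun_apply (F1 (x0, u0)) (h, 0))"
    and A3: "blinfun_apply (G1 (x0, u0)) ` contingent_cone {z. F z = 0} (x0, u0) = UNIV"
    and opt: "loc_weak_pareto I F G Q (x0, u0)"
  shows "\<forall>d \<in> crit_cone (I1 (x0, u0)) (F1 (x0, u0)) (G1 (x0, u0)) Q (G (x0, u0)).
           \<exists>(lam, v, e) \<in> Lambda2 (I1 (x0, u0)) (F1 (x0, u0)) (G1 (x0, u0)) Q (G (x0, u0)).
             lam \<bullet> blinfun_apply (blinfun_apply (I2 (x0, u0)) d) d + blinfun_apply v (blinfun_apply (blinfun_apply (F2 (x0, u0)) d) d) + blinfun_apply e (blinfun_apply (blinfun_apply (G2 (x0, u0)) d) d) \<ge> 0"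
proof -
  have S: "open (ball x0 r1 \<times> ball u0 r1')" "(x0, u0) \<in> ball x0 r1 \<times> ball u0 r1'"
    using r by (auto simp: open_Times)
  have surj: "surj (\<lambda>h. (blinfun_apply (F1 (x0, u0)) h, blinfun_apply (G1 (x0, u0)) h))"
    using surj_pair_of_partial_surj[OF bij_is_surj[OF A2] A3]
      contingent_cone_zero_set_subset_kernel[where F=F, OF C2_onD(1)[OF A1(2) S(2)] feas(1)] by blast
  obtain \<epsilon> where \<epsilon>: "\<epsilon> > 0" and pareto: "\<And>z. F z = 0 \<Longrightarrow> G z \<in> Q
      \<Longrightarrow> norm (z - (x0, u0)) \<le> \<epsilon> \<Longrightarrow> \<not> (\<forall>i. (I z - I (x0, u0)) $ i < 0)"
    using loc_weak_pareto_normD[OF opt] by blast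
  show ?thesis
    by (rule ballI, rule second_order_multiplier_rule[where ?z0.0="(x0, u0)" and I=I and F=F and G=G
          and ?I1.0=I1 and ?I2.0=I2 and ?F1.0=F1 and ?F2.0=F2 and ?G1.0=G1 and ?G2.0=G2,
          OF S C2_onD(1)[OF A1(1)] C2_onD(2)[OF A1(1) S(2)] C2_onD(1)[OF A1(2)] C2_onD(2)[OF A1(2) S(2)]
          C2_onD(1)[OF A1(3)] C2_onD(2)[OF A1(3) S(2)] Q(3) feas(2) feas(1) surj \<epsilon> pareto])
qed

end
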